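(* Let $G$ be an $n$-vertex (unweighted, undirected) graph with density $c:=|E(G)|/n^2$. Let $0<\varepsilon_0<1$, and suppose $G$ has an $\varepsilon$-regular $k$-partition $\mathcal{P}=(V_1,\dots,V_k)$ with $\frac1k\le\frac{c}{10}\cdot\frac{\varepsilon_0}{1+\varepsilon_0}$ and $\varepsilon\le(1/k)^{8k^2}$. Then $d_{\mathrm{opt}}(G,G_{/\mathcal{P}})\le\varepsilon_0$.
   Context: Graphs (and weighted graphs) are structures over the signature with one binary symbol $e$: for a graph $G$, $w_G(u,v)=e^{G}(u,v)=1$ if $uv\in E(G)$ and $0$ otherwise; for $U,V\subseteq V(G)$, $w_G(U,V)=\sum_{u\in U}\sum_{v\in V}w_G(u,v)$. For such structures, $\mathrm{opt}(G,H)=\max_{h\colon V(G)\to V(H)}\sum_{(u,v)}w_G(u,v)w_H(h(u),h(v))$ (sum over ordered pairs, maximum over all maps), and $d_{\mathrm{opt}}(G,H)=\sup_{C}|\ln\mathrm{opt}(G,C)-\ln\mathrm{opt}(H,C)|$ over all $\mathbb{Q}_{\ge0}$-weighted structures $C$ on this signature ($\ln0=-\infty$, $|\ln0-\ln0|=0$). A bipartite graph $(V_1,V_2,E)$ with density $d=w(V_1,V_2)/(|V_1||V_2|)$ is $\varepsilon$-homogeneous if for all $W_1\subseteq V_1$, $W_2\subseteq V_2$: $|w(W_1,W_2)-d|W_1||W_2||\le\varepsilon|V_1||V_2|$. An $\varepsilon$-regular $k$-partition of an $n$-vertex graph $G$ is a partition $V_1,\dots,V_k$ of $V(G)$ with $|V_i|\in\{\lfloor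 n/k\rfloor,\lceil n/k\rceil\}$ such that for all $i\ne j$ the bipartite graph between $V_i$ and $V_j$ (with the edges of $G$ between them) is $\varepsilon$-homogeneous. The quotient graph $G_{/\mathcal{P}}$ is the weighted graph on vertex set $[k]$ with weights $w_{G_{/\mathcal{P}}}(i,j)=w_G(V_i,V_j)$ for all $(i,j)\in[k]^2$. *)

theory Defs
  imports "HOL-Analysis.Analysis"
begin

definition is_graph :: "'a set \<Rightarrow> ('a \<Rightarrow> 'a \<Rightarrow> bool) \<Rightarrow> bool" where
  "is_graph V E \<longleftrightarrow> finite V \<and> (\<forall>u v. E u v \<longrightarrow> u \<in> V \<and> v \<in> V) \<and>
      (\<forall>u v. E u v \<longrightarrow> E v u) \<and> (\<forall>u. \<not> E u u)"

definition gw :: "('a \<Rightarrow> 'a \<Rightarrow> bool) \<Rightarrow> 'a \<Rightarrow> 'a \<Rightarrow> real" where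
  "gw E u v = (if E u v then 1 else 0)"

definition wset :: "('a \<Rightarrow> 'a \<Rightarrow> bool) \<Rightarrow> 'a set \<Rightarrow> 'a set \<Rightarrow> real" where
  "wset E U W = (\<Sum>u\<in>U. \<Sum>v\<in>W. gw E u v)"

definition num_edges :: "'a set \<Rightarrow> ('a \<Rightarrow> 'a \<Rightarrow> bool) \<Rightarrow> nat" where
  "num_edges V E = card {{u, v} | u v. u \<in> V \<and> v \<in> V \<and> E u v}"

definition opt :: "'a set \<Rightarrow> ('a \<Rightarrow> 'a \<Rightarrow> real) \<Rightarrow> 'b set \<Rightarrow> ('b \<Rightarrow> 'b \<Rightarrow> real) \<Rightarrow> real" where
  "opt A wA B wB = Max ((\<lambda>h. \<Sum>u\<in>A. \<Sum>v\<in>A. wA u v * wB (h u) (h v)) ` (A \<rightarrow>\<^sub>E B))"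

(* |ln a - ln b| with ln 0 = -infinity and |ln 0 - ln 0| = 0 *)
definition lndist :: "real \<Rightarrow> real \<Rightarrow> ereal" where
  "lndist a b = (if a = 0 \<and> b = 0 then 0
                 else if a = 0 \<or> b = 0 then \<infinity>
                 else ereal \<bar>ln a - ln b\<bar>)"

(* d_opt: supremum over all finite (nonempty) Q_{>=0}-weighted structures C;
   every such C is isomorphic to one on vertex set {..<m}. *)
definition d_opt :: "'a set \<Rightarrow> ('a \<Rightarrow> 'a \<Rightarrow> real) \<Rightarrow> 'b set \<Rightarrow> ('b \<Rightarrow> 'b \<Rightarrow> real) \<Rightarrow> ereal" where
  "d_opt A wA B wB =
     (SUP C \<in> {(m, w). (m::nat) \<ge> 1 \<and> (\<forall>u v. w u v \<in> \<rat> \<and> w u v \<ge> (0::real))}.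
        lndist (opt A wA {..<fst C} (snd C)) (opt B wB {..<fst C} (snd C)))"

definition homogeneous :: "('a \<Rightarrow> 'a \<Rightarrow> bool) \<Rightarrow> 'a set \<Rightarrow> 'a set \<Rightarrow> real \<Rightarrow> bool" where
  "homogeneous E A B \<epsilon> \<longleftrightarrow>
     (let d = wset E A B / (real (card A) * real (card B)) in
      \<forall>W1\<subseteq>A. \<forall>W2\<subseteq>B.
        \<bar>wset E W1 W2 - d * real (card W1) * real (card W2)\<bar> \<le> \<epsilon> * real (card A) * real (card B))"

(* epsilon-regular k-partition V_1..V_k, indexed here as P 0, ..., P (k-1) *)
definition regular_partition :: "'a set \<Rightarrow> ('a \<Rightarrow> 'a \<Rightarrow> bool) \<Rightarrow> nat \<Rightarrow> real \<Rightarrow> (nat \<Rightarrow> 'a set) \<Rightarrow> bool" where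
  "regular_partition V E k \<epsilon> P \<longleftrightarrow>
     (\<forall>i<k. P i \<subseteq> V) \<and> (\<Union>i<k. P i) = V \<and>
     (\<forall>i<k. \<forall>j<k. i \<noteq> j \<longrightarrow> P i \<inter> P j = {}) \<and>
     (\<forall>i<k. int (card (P i)) = \<lfloor>real (card V) / real k\<rfloor> \<or>
            int (card (P i)) = \<lceil>real (card V) / real k\<rceil>) \<and>
     (\<forall>i<k. \<forall>j<k. i \<noteq> j \<longrightarrow> homogeneous E (P i) (P j) \<epsilon>)"

definition quot_weight :: "('a \<Rightarrow> 'a \<Rightarrow> bool) \<Rightarrow> (nat \<Rightarrow> 'a set) \<Rightarrow> nat \<Rightarrow> nat \<Rightarrow> real" where
  "quot_weight E P i j = wset E (P i) (P j)"

end

theory Submission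
  imports Defs
begin

(* Lifting a map [k] -> C along the partition preserves its value, so opt(G/P, C) <= opt(G, C).
   Conversely, let h : V(G) -> C be optimal and let M be the largest weight of C.  Edges
   inside the parts, and between pairs of parts of density below 1/(4k), carry at most
   5/4 M n^2/k of the weight of h.  For the remaining (dense, regular) pairs a greedy embedding in
   the spirit of the counting lemma chooses one vertex t_i in each part V_i: it keeps a potential,
   namely the weight realised so far plus the expected weight towards the common neighbourhoods
   of the later parts, and regularity shows that some typical choice of t_i loses only a tiny
   amount of it.  The map i -> h(t_i) then has quotient value at least
   opt(G, C) - 3/2 M n^2/k.  A random cut of the quotient gives opt(G/P, C) >= M (c - 1/k) n^2/4,
   so the additive loss is at most a factor 1 + eps_0, and ln (1 + eps_0) <= eps_0. *)

section \<open>Counting and averaging\<close>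

definition rel_count :: "('a \<Rightarrow> 'b \<Rightarrow> bool) \<Rightarrow> 'a set \<Rightarrow> 'b set \<Rightarrow> real" where
  "rel_count R X Y = (\<Sum>u\<in>X. \<Sum>v\<in>Y. if R u v then 1 else 0)"

definition avg :: "'a set \<Rightarrow> ('a \<Rightarrow> real) \<Rightarrow> real" where
  "avg S f = (\<Sum>x\<in>S. f x) / real (card S)"

definition avg2 :: "'a set \<Rightarrow> 'b set \<Rightarrow> ('a \<Rightarrow> 'b \<Rightarrow> real) \<Rightarrow> real" where
  "avg2 S T F = (\<Sum>x\<in>S. \<Sum>y\<in>T. F x y) / (real (card S) * real (card T))"

lemma rel_count_row: "finite Y \<Longrightarrow> rel_count R {u} Y = real (card {v\<in>Y. R u v})"
  unfolding rel_count_def by (simp add: sum.If_cases Int_def conj_commute)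

lemma rel_count_column: "finite X \<Longrightarrow> rel_count R X {v} = real (card {u\<in>X. R u v})"
  unfolding rel_count_def by (simp add: sum.If_cases[of X "\<lambda>u. R u v"] Int_def conj_commute)

lemma rel_count_by_rows: "rel_count R X Y = (\<Sum>u\<in>X. rel_count R {u} Y)"
  unfolding rel_count_def by simp

lemma rel_count_converse: "rel_count R X Y = rel_count (\<lambda>v u. R u v) Y X"
  unfolding rel_count_def by (rule sum.swap)

lemma rel_count_nonneg: "rel_count R X Y \<ge> 0"
  unfolding rel_count_def by (intro sum_nonneg) auto

lemma rel_count_le: "finite X \<Longrightarrow> finite Y \<Longrightarrow> rel_count R X Y \<le> real (card X) * real (card Y)"
  unfolding rel_count_def by (rule order_trans[OF sum_mono[OF sum_mono]]) auto

lemma rel_count_True: "finite A \<Longrightarrow> finite B \<Longrightarrow> rel_count (\<lambda>_ _. True) A B = real (card A) * real (card B)"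
  unfolding rel_count_def by simp

lemma sum_rel_weight_swap:
  "(\<Sum>u\<in>X. \<Sum>v\<in>Y. if R u v then \<phi> v else 0) = (\<Sum>v\<in>Y. \<phi> v * rel_count R X {v})"
  unfolding rel_count_def sum_distrib_left by (subst sum.swap) (auto intro!: sum.cong)

lemma avg_nonneg: "(\<And>x. x \<in> S \<Longrightarrow> f x \<ge> 0) \<Longrightarrow> avg S f \<ge> 0"
  unfolding avg_def by (intro divide_nonneg_nonneg sum_nonneg) auto

lemma avg_le:
  assumes "finite S" "\<And>x. x \<in> S \<Longrightarrow> f x \<le> M" "M \<ge> 0"
  shows "avg S f \<le> M"
proof (cases "S = {}")
  case False
  then have "real (card S) > 0" using assms by (simp add: card_gt_0_iff)
  moreover have "sum f S \<le> card S * M" using sum_mono[of S f "\<lambda>_. M"] assms by simp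
  ultimately show ?thesis unfolding avg_def by (simp add: divide_le_eq mult.commute)
qed (use assms in \<open>simp add: avg_def\<close>)

lemma avg_add: "avg S (\<lambda>x. f x + g x) = avg S f + avg S g"
  unfolding avg_def by (simp add: sum.distrib add_divide_distrib)

lemma avg_cmult: "avg S (\<lambda>x. c * f x) = c * avg S f"
  unfolding avg_def by (simp add: sum_distrib_left)

lemma avg2_eq_avg_product:
  assumes "finite S" "finite T"
  shows "avg2 S T F = avg (S \<times> T) (\<lambda>p. F (fst p) (snd p))"
  unfolding avg2_def avg_def using assms
  by (simp add: sum.cartesian_product card_cartesian_product split_def)

lemma avg2_nonneg: "(\<And>x y. x \<in> S \<Longrightarrow> y \<in> T \<Longrightarrow> F x y \<ge> 0) \<Longrightarrow> avg2 S T F \<ge> 0"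
  unfolding avg2_def by (intro divide_nonneg_nonneg sum_nonneg) auto

lemma avg2_le:
  assumes "finite S" "finite T" "\<And>x y. x \<in> S \<Longrightarrow> y \<in> T \<Longrightarrow> F x y \<le> M" "M \<ge> 0"
  shows "avg2 S T F \<le> M"
  unfolding avg2_eq_avg_product[OF assms(1,2)] by (rule avg_le) (use assms in auto)

lemma exists_ge_avg:
  fixes f :: "'a \<Rightarrow> real" and c :: real
  assumes "finite X" "X \<noteq> {}" "(\<Sum>x\<in>X. f x) \<ge> card X * c"
  shows "\<exists>x\<in>X. f x \<ge> c"
proof (rule ccontr)
  assume "\<not> ?thesis"
  then have "(\<Sum>x\<in>X. f x) < (\<Sum>x\<in>X. c)" using assms by (intro sum_strict_mono) auto
  then show False using assms by simp
qed

lemma avg_restrict_ge: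
  fixes \<phi> :: "'b \<Rightarrow> real"
  assumes Y: "finite Y" and nn: "\<forall>v\<in>Y. 0 \<le> \<phi> v" and D: "real (card {v\<in>Y. R v}) \<le> D"
  shows "avg {v\<in>Y. R v} \<phi> \<ge> (\<Sum>v\<in>Y. if R v then \<phi> v else 0) / D"
proof -
  let ?Y = "{v\<in>Y. R v}"
  have s: "(\<Sum>v\<in>Y. if R v then \<phi> v else 0) = (\<Sum>v\<in>?Y. \<phi> v)"
    using Y by (simp add: sum.inter_filter)
  show ?thesis
  proof (cases "card ?Y = 0")
    case True
    then have "?Y = {}" using Y by simp
    then show ?thesis unfolding avg_def s by (simp only: sum.empty)
  next
    case False
    moreover have "(\<Sum>v\<in>?Y. \<phi> v) \<ge> 0" using nn by (intro sum_nonneg) auto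
    ultimately show ?thesis unfolding avg_def s using D by (intro divide_left_mono) auto
  qed
qed

lemma sum_subset_ge_avg:
  fixes \<phi> :: "'a \<Rightarrow> real" and \<beta> \<Phi> :: real
  assumes C: "finite C" and XC: "X \<subseteq> C" and cC: "card (C - X) \<le> \<beta> * card C" "card C \<le> 2 * card X"
    and \<phi>: "\<And>x. x \<in> C \<Longrightarrow> 0 \<le> \<phi> x \<and> \<phi> x \<le> \<Phi>" and \<beta>: "\<beta> \<ge> 0"
  shows "(\<Sum>x\<in>X. \<phi> x) \<ge> card X * (avg C \<phi> - 2 * \<beta> * \<Phi>)"
proof (cases "C = {}")
  case False
  have \<Phi>: "\<Phi> \<ge> 0" using \<phi> False by force
  have "(\<Sum>x\<in>C - X. \<phi> x) \<le> card (C - X) * \<Phi>" using sum_mono[of "C - X" \<phi> "\<lambda>_. \<Phi>"] \<phi> by auto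
  also have "\<dots> \<le> \<beta> * (2 * card X) * \<Phi>"
    using cC \<Phi> \<beta> by (intro mult_right_mono order_trans[OF cC(1) mult_left_mono]) auto
  finally have rest: "(\<Sum>x\<in>C - X. \<phi> x) \<le> 2 * \<beta> * card X * \<Phi>" by simp
  have "real (card X) / real (card C) \<le> 1" using card_mono[OF C XC] by (auto simp: divide_le_eq_1)
  then have "(card X / card C) * (\<Sum>x\<in>C. \<phi> x) \<le> (\<Sum>x\<in>C. \<phi> x)"
    using \<phi> by (intro mult_left_le_one_le sum_nonneg) auto
  moreover have "card X * avg C \<phi> = (card X / card C) * (\<Sum>x\<in>C. \<phi> x)" unfolding avg_def by simp
  ultimately have "card X * avg C \<phi> \<le> (\<Sum>x\<in>C. \<phi> x)" by simp
  then show ?thesis using rest sum.subset_diff[OF XC C, of \<phi>] by (simp add: algebra_simps)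
qed (use XC in simp)

lemma scaled_deficit_ge:
  fixes a \<Phi> f \<delta> b :: real
  assumes "0 \<le> a" "a \<le> \<Phi>" "0 \<le> f" "f \<le> 1" "1 - \<delta> \<le> f" "0 \<le> b"
  shows "f * (a - b * \<Phi>) \<ge> a - (\<delta> + b) * \<Phi>"
proof -
  have "f * (b * \<Phi>) \<le> b * \<Phi>" "(1 - \<delta>) * a \<le> f * a" "\<delta> * a \<le> \<delta> * \<Phi>"
    using assms by (auto intro: mult_left_le_one_le mult_right_mono mult_left_mono)
  then show ?thesis by (simp add: algebra_simps)
qed

lemma density_ratio_bounds:
  fixes r \<gamma> \<tau> :: real
  assumes "\<tau> \<le> r" "0 < \<gamma>" "0 < \<tau>"
  shows "(r - \<gamma>) / (r + \<gamma>) \<ge> 1 - 2 * \<gamma> / \<tau>" "(r - \<gamma>) / (r + \<gamma>) \<le> 1"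
proof -
  have rp: "r + \<gamma> > 0" using assms by simp
  have "(r - \<gamma>) / (r + \<gamma>) = 1 - 2 * \<gamma> / (r + \<gamma>)" using rp by (simp add: field_simps)
  moreover have "2 * \<gamma> / (r + \<gamma>) \<le> 2 * \<gamma> / \<tau>" using assms rp by (intro divide_left_mono) auto
  ultimately show "(r - \<gamma>) / (r + \<gamma>) \<ge> 1 - 2 * \<gamma> / \<tau>" by simp
  show "(r - \<gamma>) / (r + \<gamma>) \<le> 1" using rp assms by simp
qed

lemma ratio_product_ge:
  fixes x a b :: real
  assumes "1 - x \<le> a" "a \<le> 1" "1 - x \<le> b" "b \<le> 1" "0 \<le> x" "x \<le> 1"
  shows "1 - 2 * x \<le> a * b"
proof -
  have "(1 - x) * (1 - x) \<le> a * b" using assms by (intro mult_mono) auto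
  moreover have "(1 - x) * (1 - x) = 1 - 2 * x + x * x" by (simp add: algebra_simps)
  moreover have "0 \<le> x * x" by simp
  ultimately show ?thesis by linarith
qed

lemma card_low_degree_le:
  fixes \<rho> \<gamma> K :: real
  assumes X: "finite X" and Y: "finite Y" and \<gamma>: "\<gamma> > 0"
    and hom: "\<And>A. A \<subseteq> X \<Longrightarrow> rel_count R A Y \<ge> \<rho> * card A * card Y - K"
  shows "\<gamma> * card {u\<in>X. rel_count R {u} Y < (\<rho> - \<gamma>) * card Y} * card Y \<le> K"
proof -
  let ?L = "{u\<in>X. rel_count R {u} Y < (\<rho> - \<gamma>) * card Y}"
  have "rel_count R ?L Y \<le> (\<Sum>u\<in>?L. (\<rho> - \<gamma>) * card Y)"
    unfolding rel_count_by_rows[of R ?L] by (intro sum_mono) auto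
  moreover have "rel_count R ?L Y \<ge> \<rho> * card ?L * card Y - K" by (rule hom) auto
  ultimately show ?thesis by (simp add: algebra_simps)
qed

lemma card_high_degree_le:
  fixes \<rho> \<gamma> K :: real
  assumes X: "finite X" and Y: "finite Y" and \<gamma>: "\<gamma> > 0"
    and hom: "\<And>A. A \<subseteq> X \<Longrightarrow> rel_count R A Y \<le> \<rho> * card A * card Y + K"
  shows "\<gamma> * card {u\<in>X. rel_count R {u} Y > (\<rho> + \<gamma>) * card Y} * card Y \<le> K"
proof -
  let ?H = "{u\<in>X. rel_count R {u} Y > (\<rho> + \<gamma>) * card Y}"
  have "(\<Sum>u\<in>?H. (\<rho> + \<gamma>) * card Y) \<le> rel_count R ?H Y"
    unfolding rel_count_by_rows[of R ?H] by (intro sum_mono) auto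
  moreover have "rel_count R ?H Y \<le> \<rho> * card ?H * card Y + K" by (rule hom) auto
  ultimately show ?thesis by (simp add: algebra_simps)
qed

lemma card_low_codegree_le:
  fixes \<rho> \<gamma> K :: real
  assumes X: "finite X" and Y: "finite Y" and \<gamma>: "\<gamma> > 0"
    and hom: "\<And>B. B \<subseteq> Y \<Longrightarrow> rel_count R X B \<ge> \<rho> * card X * card B - K"
  shows "\<gamma> * card {v\<in>Y. rel_count R X {v} < (\<rho> - \<gamma>) * card X} * card X \<le> K"
  using card_low_degree_le[OF Y X \<gamma>, where R = "\<lambda>v u. R u v" and \<rho> = \<rho> and K = K] hom
  by (simp add: rel_count_converse[of R X] mult_ac)

lemma sum_avg_neighbours_ge:
  fixes \<rho> \<gamma> b \<Phi> :: real and \<phi> :: "'b \<Rightarrow> real"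
  assumes X: "finite X" "X \<noteq> {}" and Y: "finite Y"
    and \<phi>: "\<forall>v\<in>Y. 0 \<le> \<phi> v \<and> \<phi> v \<le> \<Phi>" and b: "b \<ge> 0" and \<Phi>: "\<Phi> \<ge> 0"
    and \<rho>\<gamma>: "0 \<le> \<rho> - \<gamma>" "0 < \<rho> + \<gamma>"
    and up: "\<forall>u\<in>X. rel_count R {u} Y \<le> (\<rho> + \<gamma>) * card Y"
    and bad: "card {v\<in>Y. rel_count R X {v} < (\<rho> - \<gamma>) * card X} \<le> b * card Y"
  shows "(\<Sum>u\<in>X. avg {v\<in>Y. R u v} \<phi>) \<ge> card X * ((\<rho> - \<gamma>) / (\<rho> + \<gamma>)) * (avg Y \<phi> - b * \<Phi>)"
proof (cases "Y = {}")
  case True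
  then show ?thesis using \<rho>\<gamma> b \<Phi> by (simp add: avg_def mult_nonneg_nonpos)
next
  case False
  define B where "B = {v\<in>Y. rel_count R X {v} < (\<rho> - \<gamma>) * card X}"
  define D where "D = (\<rho> + \<gamma>) * card Y"
  have cY: "real (card Y) > 0" using False Y by (simp add: card_gt_0_iff)
  then have D: "D > 0" using \<rho>\<gamma> by (simp add: D_def)
  have BY: "B \<subseteq> Y" by (auto simp: B_def)
  have "(\<Sum>v\<in>B. \<phi> v) \<le> card B * \<Phi>" using sum_mono[of B \<phi> "\<lambda>_. \<Phi>"] \<phi> by (auto simp: B_def)
  also have "\<dots> \<le> b * card Y * \<Phi>" using bad \<Phi> by (intro mult_right_mono) (auto simp: B_def)
  finally have "(\<rho> - \<gamma>) * card X * ((\<Sum>v\<in>Y. \<phi> v) - b * card Y * \<Phi>)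
      \<le> (\<rho> - \<gamma>) * card X * ((\<Sum>v\<in>Y. \<phi> v) - (\<Sum>v\<in>B. \<phi> v))"
    using \<rho>\<gamma> by (intro mult_left_mono) auto
  also have "\<dots> = (\<Sum>v\<in>Y - B. \<phi> v) * ((\<rho> - \<gamma>) * card X)"
    by (subst sum_diff[OF Y BY]) (rule mult.commute)
  also have "\<dots> = (\<Sum>v\<in>Y - B. \<phi> v * ((\<rho> - \<gamma>) * card X))"
    by (rule sum_distrib_right)
  also have "\<dots> \<le> (\<Sum>v\<in>Y - B. \<phi> v * rel_count R X {v})"
    using \<phi> by (intro sum_mono mult_left_mono) (auto simp: B_def)
  also have "\<dots> \<le> (\<Sum>v\<in>Y. \<phi> v * rel_count R X {v})"
    using \<phi> Y by (intro sum_mono2 mult_nonneg_nonneg rel_count_nonneg) auto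
  also have "\<dots> = (\<Sum>u\<in>X. \<Sum>v\<in>Y. if R u v then \<phi> v else 0)" by (rule sum_rel_weight_swap[symmetric])
  finally have main: "(\<rho> - \<gamma>) * card X * ((\<Sum>v\<in>Y. \<phi> v) - b * card Y * \<Phi>)
      \<le> (\<Sum>u\<in>X. \<Sum>v\<in>Y. if R u v then \<phi> v else 0)" .
  have "card X * ((\<rho> - \<gamma>) / (\<rho> + \<gamma>)) * (avg Y \<phi> - b * \<Phi>)
      = (\<rho> - \<gamma>) * card X * ((\<Sum>v\<in>Y. \<phi> v) - b * card Y * \<Phi>) / D"
    using cY \<rho>\<gamma> unfolding avg_def D_def by (simp add: field_simps)
  also have "\<dots> \<le> (\<Sum>u\<in>X. (\<Sum>v\<in>Y. if R u v then \<phi> v else 0) / D)"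
    using main D by (simp add: sum_divide_distrib[symmetric] divide_right_mono)
  also have "\<dots> \<le> (\<Sum>u\<in>X. avg {v\<in>Y. R u v} \<phi>)"
    using avg_restrict_ge[OF Y] \<phi> up by (intro sum_mono) (auto simp: D_def rel_count_row[OF Y])
  finally show ?thesis .
qed

lemma sum_avg2_neighbours_ge:
  fixes \<rho>1 \<rho>2 \<gamma> b B :: real and F :: "'b \<Rightarrow> 'c \<Rightarrow> real"
  assumes X: "finite X" "X \<noteq> {}" and Y: "finite Y" and Z: "finite Z"
    and F: "\<forall>v\<in>Y. \<forall>w\<in>Z. 0 \<le> F v w \<and> F v w \<le> B" and b: "b \<ge> 0" and B: "B \<ge> 0"
    and \<rho>\<gamma>: "0 \<le> \<rho>1 - \<gamma>" "0 < \<rho>1 + \<gamma>" "0 \<le> \<rho>2 - \<gamma>" "0 < \<rho>2 + \<gamma>"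
    and up1: "\<forall>u\<in>X. rel_count R1 {u} Y \<le> (\<rho>1 + \<gamma>) * card Y"
    and up2: "\<forall>u\<in>X. rel_count R2 {u} Z \<le> (\<rho>2 + \<gamma>) * card Z"
    and bad: "card {p\<in>Y \<times> Z. card {u\<in>X. R1 u (fst p) \<and> R2 u (snd p)} < (\<rho>1 - \<gamma>) * (\<rho>2 - \<gamma>) * card X}
                \<le> b * (card Y * card Z)"
  shows "(\<Sum>u\<in>X. avg2 {v\<in>Y. R1 u v} {w\<in>Z. R2 u w} F)
          \<ge> card X * ((\<rho>1 - \<gamma>) * (\<rho>2 - \<gamma>) / ((\<rho>1 + \<gamma>) * (\<rho>2 + \<gamma>))) * (avg2 Y Z F - b * B)"
proof -
  \<comment> \<open>Apply the unary statement to \<open>Y \<times> Z\<close>, with centre \<open>r\<close> and radius \<open>g\<close> chosen so that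
    \<open>r \<plusminus> g\<close> are the products of the two density bounds.\<close>
  define R where "R = (\<lambda>u p. R1 u (fst p) \<and> R2 u (snd p))"
  define r where "r = ((\<rho>1 + \<gamma>) * (\<rho>2 + \<gamma>) + (\<rho>1 - \<gamma>) * (\<rho>2 - \<gamma>)) / 2"
  define g where "g = ((\<rho>1 + \<gamma>) * (\<rho>2 + \<gamma>) - (\<rho>1 - \<gamma>) * (\<rho>2 - \<gamma>)) / 2"
  have rp: "r + g = (\<rho>1 + \<gamma>) * (\<rho>2 + \<gamma>)" and rm: "r - g = (\<rho>1 - \<gamma>) * (\<rho>2 - \<gamma>)"
    unfolding r_def g_def by (simp_all add: field_simps)
  have YZ: "finite (Y \<times> Z)" using Y Z by simp
  have sets: "{p\<in>Y \<times> Z. R u p} = {v\<in>Y. R1 u v} \<times> {w\<in>Z. R2 u w}" for u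
    unfolding R_def by auto
  have up: "\<forall>u\<in>X. rel_count R {u} (Y \<times> Z) \<le> (r + g) * card (Y \<times> Z)"
  proof
    fix u assume u: "u \<in> X"
    have "rel_count R {u} (Y \<times> Z) = real (card {v\<in>Y. R1 u v}) * real (card {w\<in>Z. R2 u w})"
      using YZ by (simp add: rel_count_row sets card_cartesian_product)
    also have "\<dots> \<le> ((\<rho>1 + \<gamma>) * card Y) * ((\<rho>2 + \<gamma>) * card Z)"
      using up1 up2 u by (intro mult_mono) (auto simp: rel_count_row[OF Y] rel_count_row[OF Z])
    finally show "rel_count R {u} (Y \<times> Z) \<le> (r + g) * card (Y \<times> Z)"
      unfolding rp by (simp add: card_cartesian_product algebra_simps)
  qed
  have "rel_count R X {p} = real (card {u\<in>X. R1 u (fst p) \<and> R2 u (snd p)})" for p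
    using X by (simp add: rel_count_column R_def)
  then have bad': "card {p\<in>Y \<times> Z. rel_count R X {p} < (r - g) * card X} \<le> b * card (Y \<times> Z)"
    using bad unfolding rm by (simp add: card_cartesian_product)
  have "\<forall>p\<in>Y \<times> Z. 0 \<le> F (fst p) (snd p) \<and> F (fst p) (snd p) \<le> B" using F by auto
  from sum_avg_neighbours_ge[OF X YZ this b B _ _ up bad'] \<rho>\<gamma>
  have "(\<Sum>u\<in>X. avg {p\<in>Y \<times> Z. R u p} (\<lambda>p. F (fst p) (snd p)))
      \<ge> card X * ((r - g) / (r + g)) * (avg (Y \<times> Z) (\<lambda>p. F (fst p) (snd p)) - b * B)"
    unfolding rm rp by auto
  moreover have "avg2 {v\<in>Y. R1 u v} {w\<in>Z. R2 u w} F = avg {p\<in>Y \<times> Z. R u p} (\<lambda>p. F (fst p) (snd p))" for u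
    unfolding sets using Y Z by (intro avg2_eq_avg_product) auto
  ultimately show ?thesis unfolding avg2_eq_avg_product[OF Y Z] rp rm by simp
qed

lemma sum_avg_neighbours_weight_ge:
  fixes \<kappa> \<rho> \<gamma> \<beta> B :: real
  assumes C: "finite C" and XC: "X \<subseteq> C" and Xne: "X \<noteq> {}" and Y: "finite Y"
    and F: "\<forall>u\<in>C. \<forall>v\<in>Y. 0 \<le> F u v \<and> F u v \<le> B"
    and zero: "\<forall>u\<in>C. \<forall>v\<in>Y. \<not> R u v \<longrightarrow> F u v = 0"
    and up: "\<forall>u\<in>X. rel_count R {u} Y \<le> (\<rho> + \<gamma>) * card Y"
    and pos: "\<rho> > 0" "\<gamma> \<ge> 0" "\<kappa> \<ge> 0" "B \<ge> 0" "\<beta> \<ge> 0"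
    and cC: "card (C - X) \<le> \<beta> * card C" "card C \<le> 2 * card X"
  shows "(\<Sum>u\<in>X. \<kappa> * \<rho> * avg {v\<in>Y. R u v} (F u))
          \<ge> card X * (\<kappa> * avg2 C Y F - \<kappa> * B * (\<gamma> / \<rho> + 2 * \<beta>))"
proof (cases "Y = {}")
  case True
  then show ?thesis using pos by (simp add: avg2_def avg_def mult_nonpos_nonneg)
next
  case False
  define q where "q = \<rho> / (\<rho> + \<gamma>)"
  define s where "s = avg2 C Y F"
  define D where "D = (\<rho> + \<gamma>) * card Y"
  have D: "D > 0" using False Y pos by (simp add: D_def card_gt_0_iff)
  have q: "0 \<le> q" "q \<le> 1" "1 - \<gamma> / \<rho> \<le> q"
    using pos by (auto simp: q_def field_simps)
  have s: "0 \<le> s" "s \<le> B"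
    unfolding s_def using F pos by (auto intro!: avg2_nonneg avg2_le C Y)
  have "real (card Y) > 0" using False Y by (simp add: card_gt_0_iff)
  then have "avg C (\<lambda>u. \<Sum>v\<in>Y. F u v) = card Y * s"
    unfolding avg_def s_def avg2_def by (simp add: field_simps)
  then have rows: "card X * (card Y * s - 2 * \<beta> * (card Y * B)) \<le> (\<Sum>u\<in>X. \<Sum>v\<in>Y. F u v)"
    using sum_subset_ge_avg[OF C XC cC, of "\<lambda>u. \<Sum>v\<in>Y. F u v" "card Y * B"] F pos
    by (simp add: sum_nonneg sum_bounded_above)
  have "card X * (\<kappa> * s - \<kappa> * B * (\<gamma> / \<rho> + 2 * \<beta>)) = \<kappa> * card X * (s - (\<gamma> / \<rho> + 2 * \<beta>) * B)"
    by (simp add: algebra_simps)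
  also have "\<dots> \<le> \<kappa> * card X * (q * (s - 2 * \<beta> * B))"
    using scaled_deficit_ge[OF s q(1,2,3), of "2 * \<beta>"] pos by (intro mult_left_mono) auto
  also have "\<dots> = \<kappa> * \<rho> / D * (card X * (card Y * s - 2 * \<beta> * (card Y * B)))"
    using D pos by (simp add: q_def D_def field_simps)
  also have "\<dots> \<le> \<kappa> * \<rho> / D * (\<Sum>u\<in>X. \<Sum>v\<in>Y. F u v)"
    using rows D pos by (intro mult_left_mono) auto
  also have "\<dots> = (\<Sum>u\<in>X. \<kappa> * \<rho> * ((\<Sum>v\<in>Y. F u v) / D))"
    by (simp add: sum_distrib_left sum_divide_distrib mult_ac)
  also have "\<dots> = (\<Sum>u\<in>X. \<kappa> * \<rho> * ((\<Sum>v\<in>Y. if R u v then F u v else 0) / D))"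
    using zero XC by (intro sum.cong refl arg_cong2[where f = "(*)"] arg_cong2[where f = "(/)"]) auto
  also have "\<dots> \<le> (\<Sum>u\<in>X. \<kappa> * \<rho> * avg {v\<in>Y. R u v} (F u))"
    using avg_restrict_ge[OF Y] F up XC pos
    by (intro sum_mono mult_left_mono) (auto simp: D_def rel_count_row[OF Y])
  finally show ?thesis unfolding s_def .
qed

lemma few_common_neighbours_subset:
  fixes a b :: real
  assumes X: "finite X" and b: "b \<ge> 0"
  shows "{p\<in>Y \<times> Z. card {u\<in>X. R1 u (fst p) \<and> R2 u (snd p)} < a * b * card X}
    \<subseteq> {v\<in>Y. rel_count R1 X {v} < a * card X} \<times> Z
      \<union> (SIGMA v:Y - {v\<in>Y. rel_count R1 X {v} < a * card X}.
            {w\<in>Z. rel_count R2 {u\<in>X. R1 u v} {w} < b * card {u\<in>X. R1 u v}})"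
proof
  fix p assume p: "p \<in> {p\<in>Y \<times> Z. card {u\<in>X. R1 u (fst p) \<and> R2 u (snd p)} < a * b * card X}"
  obtain v w where pvw: "p = (v, w)" by force
  show "p \<in> {v\<in>Y. rel_count R1 X {v} < a * card X} \<times> Z
      \<union> (SIGMA v:Y - {v\<in>Y. rel_count R1 X {v} < a * card X}.
            {w\<in>Z. rel_count R2 {u\<in>X. R1 u v} {w} < b * card {u\<in>X. R1 u v}})"
  proof (cases "rel_count R1 X {v} < a * card X")
    case False
    then have "a * card X \<le> card {u\<in>X. R1 u v}" using X by (simp add: rel_count_column)
    then have "b * (a * card X) \<le> b * card {u\<in>X. R1 u v}" using b by (rule mult_left_mono)
    moreover have "{u\<in>{u\<in>X. R1 u v}. R2 u w} = {u\<in>X. R1 u v \<and> R2 u w}" by auto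
    ultimately have "rel_count R2 {u\<in>X. R1 u v} {w} < b * card {u\<in>X. R1 u v}"
      using p X by (simp add: pvw rel_count_column mult_ac)
    then show ?thesis using p False by (simp add: pvw)
  qed (use p pvw in auto)
qed

lemma card_few_common_neighbours_le:
  fixes \<rho>1 \<rho>2 \<gamma> K1 K2 :: real
  assumes XX0: "X \<subseteq> X0" and X0: "finite X0" and Y: "finite Y" and Z: "finite Z" and Xne: "X \<noteq> {}"
    and hom1: "\<And>A B. A \<subseteq> X0 \<Longrightarrow> B \<subseteq> Y \<Longrightarrow> rel_count R1 A B \<ge> \<rho>1 * card A * card B - K1"
    and hom2: "\<And>A B. A \<subseteq> X0 \<Longrightarrow> B \<subseteq> Z \<Longrightarrow> rel_count R2 A B \<ge> \<rho>2 * card A * card B - K2"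
    and \<gamma>: "\<gamma> > 0" "\<rho>1 - \<gamma> > 0" "\<rho>2 - \<gamma> \<ge> 0"
  shows "card {p\<in>Y \<times> Z. card {u\<in>X. R1 u (fst p) \<and> R2 u (snd p)} < (\<rho>1 - \<gamma>) * (\<rho>2 - \<gamma>) * card X}
          \<le> K1 * card Z / (\<gamma> * card X) + card Y * K2 / (\<gamma> * (\<rho>1 - \<gamma>) * card X)"
proof -
  have X: "finite X" using XX0 X0 finite_subset by auto
  have cX: "real (card X) > 0" using X Xne by (simp add: card_gt_0_iff)
  define A where "A v = {u\<in>X. R1 u v}" for v
  define B1 where "B1 = {v\<in>Y. rel_count R1 X {v} < (\<rho>1 - \<gamma>) * card X}"
  define B2 where "B2 v = {w\<in>Z. rel_count R2 (A v) {w} < (\<rho>2 - \<gamma>) * card (A v)}" for v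
  have K2: "K2 \<ge> 0" using hom2[of "{}" "{}"] by (simp add: rel_count_def)
  have "\<gamma> * card B1 * card X \<le> K1"
    unfolding B1_def by (rule card_low_codegree_le[OF X Y \<gamma>(1)]) (use hom1 XX0 in auto)
  then have "card B1 \<le> K1 / (\<gamma> * card X)" using \<gamma> cX by (simp add: field_simps)
  then have B1: "card B1 * card Z \<le> K1 * card Z / (\<gamma> * card X)"
    using mult_right_mono[of _ _ "real (card Z)"] by fastforce
  have B2: "card (B2 v) \<le> K2 / (\<gamma> * (\<rho>1 - \<gamma>) * card X)" if v: "v \<in> Y - B1" for v
  proof -
    have AX: "A v \<subseteq> X" unfolding A_def by auto
    have "\<gamma> * card (B2 v) * card (A v) \<le> K2"
      unfolding B2_def using X AX finite_subset
      by (intro card_low_codegree_le[OF _ Z \<gamma>(1)]) (use hom2 AX XX0 in auto)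
    moreover have "(\<rho>1 - \<gamma>) * card X \<le> card (A v)"
      using v X unfolding B1_def A_def by (auto simp: rel_count_column not_less)
    ultimately have "\<gamma> * card (B2 v) * ((\<rho>1 - \<gamma>) * card X) \<le> K2"
      using \<gamma> by (smt (verit) mult_left_mono mult_nonneg_nonneg of_nat_0_le_iff)
    then show ?thesis using \<gamma> cX by (simp add: field_simps)
  qed
  have "card {p\<in>Y \<times> Z. card {u\<in>X. R1 u (fst p) \<and> R2 u (snd p)} < (\<rho>1 - \<gamma>) * (\<rho>2 - \<gamma>) * card X}
      \<le> card (B1 \<times> Z \<union> Sigma (Y - B1) B2)"
    using few_common_neighbours_subset[OF X \<gamma>(3), of Y Z R1 R2 "\<rho>1 - \<gamma>"] Y Z
    by (intro card_mono) (auto simp: A_def B1_def B2_def)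
  also have "\<dots> \<le> card (B1 \<times> Z) + card (Sigma (Y - B1) B2)" by (rule card_Un_le)
  also have "card (Sigma (Y - B1) B2) = (\<Sum>v\<in>Y - B1. card (B2 v))"
    using Y Z by (simp add: card_SigmaI B2_def)
  finally have "card {p\<in>Y \<times> Z. card {u\<in>X. R1 u (fst p) \<and> R2 u (snd p)} < (\<rho>1 - \<gamma>) * (\<rho>2 - \<gamma>) * card X}
      \<le> real (card B1) * card Z + (\<Sum>v\<in>Y - B1. real (card (B2 v)))"
    by (simp add: card_cartesian_product flip: of_nat_add of_nat_mult of_nat_sum)
  also have "(\<Sum>v\<in>Y - B1. real (card (B2 v))) \<le> (\<Sum>v\<in>Y - B1. K2 / (\<gamma> * (\<rho>1 - \<gamma>) * card X))"
    by (intro sum_mono B2)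
  also have "\<dots> = card (Y - B1) * (K2 / (\<gamma> * (\<rho>1 - \<gamma>) * card X))" by simp
  also have "\<dots> \<le> card Y * (K2 / (\<gamma> * (\<rho>1 - \<gamma>) * card X))"
    using Y K2 \<gamma> cX by (intro mult_right_mono) (auto simp: card_mono)
  finally show ?thesis using B1 by simp
qed

section \<open>A greedy embedding along dense regular pairs\<close>

locale greedy_embedding =
  fixes k :: nat and P :: "nat \<Rightarrow> 'a set" and E :: "'a \<Rightarrow> 'a \<Rightarrow> bool"
    and dense :: "nat \<Rightarrow> nat \<Rightarrow> bool" and \<rho> :: "nat \<Rightarrow> nat \<Rightarrow> real"
    and F :: "'a \<Rightarrow> 'a \<Rightarrow> real" and Bd \<epsilon> \<gamma> \<tau> :: real
  assumes finite_parts: "\<And>i. i < k \<Longrightarrow> finite (P i)"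
    and dense_sym: "\<And>i j. dense i j = dense j i"
    and dense_density: "\<And>i j. dense i j \<Longrightarrow> \<tau> \<le> \<rho> i j \<and> \<rho> i j \<le> 1"
    and dense_nonempty: "\<And>i j. dense i j \<Longrightarrow> card (P i) > 0"
    and dense_homogeneous: "\<And>i j A B. dense i j \<Longrightarrow> A \<subseteq> P i \<Longrightarrow> B \<subseteq> P j \<Longrightarrow>
               \<bar>rel_count E A B - \<rho> i j * card A * card B\<bar> \<le> \<epsilon> * card (P i) * card (P j)"
    and F_bounds: "\<And>u v. 0 \<le> F u v \<and> F u v \<le> Bd"
    and F_nonedge: "\<And>u v. \<not> E u v \<Longrightarrow> F u v = 0"
    and gamma_pos: "0 < \<gamma>" and gamma_le_half_tau: "2 * \<gamma> \<le> \<tau>" and tau_le_1: "\<tau> \<le> 1"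
    and eps_nonneg: "0 \<le> \<epsilon>"
    and eps_small: "4 * k * \<epsilon> / (\<gamma> * (\<tau> - \<gamma>) * ((\<tau> - \<gamma>) ^ k)^2) \<le> 1 / 2"
begin

definition \<alpha> :: real where
  "\<alpha> = (\<tau> - \<gamma>) ^ k"

definition \<beta> :: real where
  "\<beta> = 4 * k * \<epsilon> / (\<gamma> * (\<tau> - \<gamma>) * \<alpha>^2)"

lemma beta_le_half: "\<beta> \<le> 1 / 2"
  using eps_small unfolding \<beta>_def \<alpha>_def .

(* The vertices t 0, t 1, ... are chosen one part at a time.  Once t 0, ..., t (l - 1) are fixed,
   cand l t j is the set of candidates for t j (pairs that are not dense are linked by the
   complete relation, so only dense pairs restrict it), and potential l t is the weight realised so
   far plus the expected remaining weight if every later t j were drawn uniformly from its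
   candidate set.  Choosing t l among the typical candidates keeps all later candidate sets
   large and loses at most step_loss of the potential. *)

definition link :: "nat \<Rightarrow> nat \<Rightarrow> 'a \<Rightarrow> 'a \<Rightarrow> bool" where
  "link i j u v = (if dense i j then E u v else True)"

definition link_density :: "nat \<Rightarrow> nat \<Rightarrow> real" where
  "link_density i j = (if dense i j then \<rho> i j else 1)"

definition N :: "nat \<Rightarrow> real" where
  "N i = real (card (P i))"

definition dense_size :: "nat \<Rightarrow> nat \<Rightarrow> real" where
  "dense_size i j = (if dense i j then N i * N j else 0)"

definition dense_weight :: "nat \<Rightarrow> nat \<Rightarrow> real" where
  "dense_weight i j = dense_size i j * link_density i j"

definition cand :: "nat \<Rightarrow> (nat \<Rightarrow> 'a) \<Rightarrow> nat \<Rightarrow> 'a set" where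
  "cand l t j = {v\<in>P j. \<forall>i<l. link i j (t i) v}"

definition gain :: "nat \<Rightarrow> (nat \<Rightarrow> 'a) \<Rightarrow> nat \<Rightarrow> 'a \<Rightarrow> real" where
  "gain l t j v = (\<Sum>i<l. dense_weight i j * F (t i) v)"

definition realized :: "nat \<Rightarrow> (nat \<Rightarrow> 'a) \<Rightarrow> real" where
  "realized l t = (\<Sum>j<l. gain j t j (t j))"

definition pending :: "nat \<Rightarrow> (nat \<Rightarrow> 'a) \<Rightarrow> real" where
  "pending l t = (\<Sum>j\<in>{l..<k}. avg (cand l t j) (gain l t j))"

definition future :: "nat \<Rightarrow> (nat \<Rightarrow> 'a) \<Rightarrow> real" where
  "future l t = (\<Sum>i\<in>{l..<k}. \<Sum>j\<in>{i<..<k}. dense_size i j * avg2 (cand l t i) (cand l t j) F)"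

definition potential :: "nat \<Rightarrow> (nat \<Rightarrow> 'a) \<Rightarrow> real" where
  "potential l t = realized l t + pending l t + future l t"

definition cands_large :: "nat \<Rightarrow> (nat \<Rightarrow> 'a) \<Rightarrow> bool" where
  "cands_large l t = (\<forall>j\<in>{l..<k}. real (card (cand l t j)) \<ge> (\<tau> - \<gamma>) ^ l * N j)"

definition typical :: "nat \<Rightarrow> (nat \<Rightarrow> 'a) \<Rightarrow> 'a set" where
  "typical l t = {u\<in>cand l t l. \<forall>j\<in>{l<..<k}.
      (link_density l j - \<gamma>) * card (cand l t j) \<le> rel_count (link l j) {u} (cand l t j) \<and>
      rel_count (link l j) {u} (cand l t j) \<le> (link_density l j + \<gamma>) * card (cand l t j)}"

definition n :: real where
  "n = (\<Sum>i<k. N i)"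

definition step_loss :: real where
  "step_loss = Bd * n^2 * (8 * \<gamma> / \<tau> + 6 * \<beta>)"

lemma tau_gamma: "\<tau> - \<gamma> \<ge> \<gamma>" "\<tau> - \<gamma> > 0" "\<tau> - \<gamma> \<le> 1" "\<tau> > 0"
  using gamma_pos gamma_le_half_tau tau_le_1 by auto

lemma alpha_pos: "\<alpha> > 0" unfolding \<alpha>_def using tau_gamma by simp
lemma alpha_le_power: "l \<le> k \<Longrightarrow> \<alpha> \<le> (\<tau> - \<gamma>) ^ l"
  unfolding \<alpha>_def using tau_gamma by (intro power_decreasing) auto
lemma link_density_bounds: "\<tau> \<le> link_density i j" "link_density i j \<le> 1"
  unfolding link_density_def using dense_density tau_le_1 by auto

lemma N_nonneg: "N i \<ge> 0" unfolding N_def by simp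

lemma dense_size_nonneg: "dense_size i j \<ge> 0" unfolding dense_size_def using N_nonneg by simp
lemma dense_size_le: "dense_size i j \<le> N i * N j" unfolding dense_size_def using N_nonneg by simp
lemma dense_weight_nonneg: "dense_weight i j \<ge> 0" unfolding dense_weight_def
  using dense_size_nonneg link_density_bounds tau_gamma
  by (meson mult_nonneg_nonneg order_trans less_imp_le)
lemma dense_weight_le: "dense_weight i j \<le> N i * N j"
proof -
  have "dense_weight i j \<le> dense_size i j * 1" unfolding dense_weight_def
    using dense_size_nonneg link_density_bounds by (intro mult_left_mono) auto
  then show ?thesis using dense_size_le[of i j] by simp
qed

lemma cand_subset: "cand l t j \<subseteq> P j" unfolding cand_def by auto
lemma finite_cand: "j < k \<Longrightarrow> finite (cand l t j)" using finite_parts cand_subset finite_subset by metis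
lemma cand_0: "cand 0 t j = P j" unfolding cand_def by simp
lemma cand_Suc: "cand (Suc l) (t(l := u)) j = {v\<in>cand l t j. link l j u v}"
  unfolding cand_def by (auto simp: less_Suc_eq)
lemma gain_upd: "gain l (t(l := u)) j = gain l t j" unfolding gain_def by (intro ext sum.cong) auto
lemma gain_Suc: "gain (Suc l) (t(l := u)) j v = gain l t j v + dense_weight l j * F u v"
  unfolding gain_def by (simp add: gain_def)
lemma gain_upd_le: "j \<le> l \<Longrightarrow> gain j (t(l := u)) i = gain j t i" unfolding gain_def
  by (intro ext sum.cong) auto
lemma realized_Suc: "realized (Suc l) (t(l := u)) = realized l t + gain l t l u"
proof -
  have "realized (Suc l) (t(l := u)) = (\<Sum>j<l. gain j (t(l := u)) j ((t(l := u)) j)) + gain l (t(l := u)) l u"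
    unfolding realized_def by simp
  also have "(\<Sum>j<l. gain j (t(l := u)) j ((t(l := u)) j)) = realized l t"
    unfolding realized_def by (intro sum.cong) (auto simp: gain_upd_le)
  finally show ?thesis by (simp only: gain_upd)
qed

lemma gain_nonneg: "gain l t j v \<ge> 0" unfolding gain_def using dense_weight_nonneg F_bounds
  by (intro sum_nonneg mult_nonneg_nonneg) auto

lemma N_le_n: "i < k \<Longrightarrow> N i \<le> n"
  unfolding n_def using N_nonneg by (intro member_le_sum) auto

lemma gain_le: "l \<le> k \<Longrightarrow> gain l t j v \<le> Bd * n * N j"
proof -
  assume l: "l \<le> k"
  have "gain l t j v \<le> (\<Sum>i<l. N i * N j * Bd)"
    unfolding gain_def using dense_weight_le dense_weight_nonneg F_bounds N_nonneg
    by (intro sum_mono mult_mono) (auto intro: mult_nonneg_nonneg)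
  also have "\<dots> = (\<Sum>i<l. N i) * N j * Bd" by (simp add: sum_distrib_right)
  also have "\<dots> \<le> (\<Sum>i<k. N i) * N j * Bd"
    using l N_nonneg F_bounds[of undefined undefined]
    by (intro mult_right_mono sum_mono2) (auto intro: mult_nonneg_nonneg)
  finally show ?thesis unfolding n_def by (simp add: algebra_simps)
qed

lemma link_homogeneous:
  assumes "l < k" "j < k" "l \<noteq> j" "A \<subseteq> P l" "B \<subseteq> P j"
  shows "\<bar>rel_count (link l j) A B - link_density l j * card A * card B\<bar> \<le> \<epsilon> * N l * N j"
proof (cases "dense l j")
  case True
  have "link l j = E" using True unfolding link_def by (intro ext) auto
  then show ?thesis using dense_homogeneous[OF True assms(4,5)] True unfolding link_density_def N_def
    by simp
next
  case False
  have "link l j = (\<lambda>_ _. True)" using False unfolding link_def by (intro ext) auto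
  moreover have "finite A" "finite B" using assms finite_parts finite_subset by metis+
  ultimately show ?thesis using False eps_nonneg N_nonneg unfolding link_density_def
    by (simp add: rel_count_True)
qed

lemma beta_ge: "2 * k * \<epsilon> / (\<gamma> * \<alpha>^2) \<le> \<beta>"
proof -
  have a: "\<gamma> * \<alpha>^2 > 0" using gamma_pos alpha_pos by simp
  have "2 * k * \<epsilon> / (\<gamma> * \<alpha>^2) \<le> 4 * k * \<epsilon> / (\<gamma> * \<alpha>^2)"
    using a eps_nonneg by (intro divide_right_mono) auto
  also have "\<dots> \<le> 4 * k * \<epsilon> / (\<gamma> * (\<tau> - \<gamma>) * \<alpha>^2)"
  proof -
    have "\<gamma> * (\<tau> - \<gamma>) * \<alpha>^2 \<le> \<gamma> * \<alpha>^2" using tau_gamma a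
      by (metis mult.commute mult.left_commute mult_left_le order_less_imp_le)
    moreover have "\<gamma> * (\<tau> - \<gamma>) * \<alpha>^2 > 0"
      by (intro mult_pos_pos) (use gamma_pos tau_gamma alpha_pos in auto)
    ultimately show ?thesis using eps_nonneg by (intro divide_left_mono) auto
  qed
  finally show ?thesis unfolding \<beta>_def .
qed

lemma beta_nonneg: "\<beta> \<ge> 0"
  unfolding \<beta>_def using eps_nonneg gamma_pos tau_gamma alpha_pos by simp

lemma card_cand_ge:
  assumes "cands_large l t" "l \<le> k" "j \<in> {l..<k}"
  shows "real (card (cand l t j)) \<ge> \<alpha> * N j"
proof -
  have "\<alpha> * N j \<le> (\<tau> - \<gamma>) ^ l * N j" using alpha_le_power[OF assms(2)] N_nonneg
    by (intro mult_right_mono) auto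
  then show ?thesis using assms unfolding cands_large_def by force
qed

lemma card_atypical_degree_le:
  assumes l: "l < k" and inv: "cands_large l t" and j: "j \<in> {l<..<k}"
  shows "card {u\<in>cand l t l. rel_count (link l j) {u} (cand l t j) < (link_density l j - \<gamma>) * card (cand l t j)}
       + card {u\<in>cand l t l. rel_count (link l j) {u} (cand l t j) > (link_density l j + \<gamma>) * card (cand l t j)}
     \<le> 2 * \<epsilon> * N l / (\<gamma> * \<alpha>)"
proof (cases "cand l t j = {}")
  case True
  then show ?thesis using eps_nonneg N_nonneg gamma_pos alpha_pos by (simp add: rel_count_def)
next
  case False
  let ?C = "cand l t l" and ?D = "cand l t j" and ?R = "link l j" and ?r = "link_density l j"
  have fC: "finite ?C" and fD: "finite ?D" using finite_cand l j by auto
  then have D: "real (card ?D) > 0" using False by (simp add: card_gt_0_iff)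
  have hom: "\<bar>rel_count ?R A ?D - ?r * card A * card ?D\<bar> \<le> \<epsilon> * N l * N j" if "A \<subseteq> ?C" for A
  proof -
    have "A \<subseteq> P l" using that cand_subset by blast
    then show ?thesis using link_homogeneous[of l j A ?D] l j cand_subset by auto
  qed
  define L H where "L = real (card {u\<in>?C. rel_count ?R {u} ?D < (?r - \<gamma>) * card ?D})"
    and "H = real (card {u\<in>?C. rel_count ?R {u} ?D > (?r + \<gamma>) * card ?D})"
  have "\<gamma> * L * card ?D \<le> \<epsilon> * N l * N j"
  proof -
    have "?r * card A * card ?D - \<epsilon> * N l * N j \<le> rel_count ?R A ?D" if "A \<subseteq> ?C" for A
      using abs_le_D2[OF hom[OF that]] by linarith
    then show ?thesis unfolding L_def by (rule card_low_degree_le[OF fC fD gamma_pos])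
  qed
  moreover have "\<gamma> * H * card ?D \<le> \<epsilon> * N l * N j"
  proof -
    have "rel_count ?R A ?D \<le> ?r * card A * card ?D + \<epsilon> * N l * N j" if "A \<subseteq> ?C" for A
      using abs_le_D1[OF hom[OF that]] by linarith
    then show ?thesis unfolding H_def by (rule card_high_degree_le[OF fC fD gamma_pos])
  qed
  moreover have "\<epsilon> * N l * N j \<le> \<epsilon> * N l * (card ?D / \<alpha>)"
    using card_cand_ge[OF inv, of j] l j alpha_pos eps_nonneg N_nonneg
    by (intro mult_left_mono) (auto simp: field_simps)
  moreover have "\<gamma> * card ?D * (L + H) = \<gamma> * L * card ?D + \<gamma> * H * card ?D" by (simp add: algebra_simps)
  ultimately have "\<gamma> * card ?D * (L + H) \<le> 2 * (\<epsilon> * N l * (card ?D / \<alpha>))" by linarith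
  also have "\<dots> = \<gamma> * card ?D * (2 * \<epsilon> * N l / (\<gamma> * \<alpha>))" using gamma_pos alpha_pos
    by (simp add: field_simps)
  finally have "\<gamma> * card ?D * (L + H) \<le> \<gamma> * card ?D * (2 * \<epsilon> * N l / (\<gamma> * \<alpha>))" .
  moreover have "0 < \<gamma> * card ?D" using D gamma_pos by simp
  ultimately have "L + H \<le> 2 * \<epsilon> * N l / (\<gamma> * \<alpha>)" by (simp only: mult_le_cancel_left_pos)
  then show ?thesis unfolding L_def H_def of_nat_add .
qed

lemma card_atypical_le:
  assumes l: "l < k" and inv: "cands_large l t"
  shows "card (cand l t l - typical l t) \<le> \<beta> * card (cand l t l)"
proof (cases "cand l t l = {}")
  case True then show ?thesis by simp
next
  case False
  define Lo where
    "Lo j = {u\<in>cand l t l. rel_count (link l j) {u} (cand l t j) < (link_density l j - \<gamma>) * card (cand l t j)}"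
    for j
  define Hi where
    "Hi j = {u\<in>cand l t l. rel_count (link l j) {u} (cand l t j) > (link_density l j + \<gamma>) * card (cand l t j)}"
    for j
  have fC: "finite (cand l t l)" using finite_cand l by blast
  have sub: "cand l t l - typical l t \<subseteq> (\<Union>j\<in>{l<..<k}. Lo j \<union> Hi j)"
    unfolding typical_def Lo_def Hi_def by (auto simp: not_le)
  have finite_parts: "finite (Lo j \<union> Hi j)" for j unfolding Lo_def Hi_def using fC by simp
  have "card (cand l t l - typical l t) \<le> card (\<Union>j\<in>{l<..<k}. Lo j \<union> Hi j)"
    by (rule card_mono) (use finite_parts sub in auto)
  also have "\<dots> \<le> (\<Sum>j\<in>{l<..<k}. card (Lo j \<union> Hi j))" by (rule card_UN_le) simp
  also have "\<dots> \<le> (\<Sum>j\<in>{l<..<k}. card (Lo j) + card (Hi j))" by (intro sum_mono card_Un_le)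
  finally have c1: "real (card (cand l t l - typical l t))
      \<le> (\<Sum>j\<in>{l<..<k}. real (card (Lo j)) + real (card (Hi j)))"
    by (simp flip: of_nat_add of_nat_sum)
  have "(\<Sum>j\<in>{l<..<k}. real (card (Lo j)) + real (card (Hi j))) \<le> (\<Sum>j\<in>{l<..<k}. 2 * \<epsilon> * N l / (\<gamma> * \<alpha>))"
    unfolding Lo_def Hi_def using card_atypical_degree_le[OF l inv] by (intro sum_mono) auto
  also have "\<dots> = card {l<..<k} * (2 * \<epsilon> * N l / (\<gamma> * \<alpha>))" by simp
  also have "\<dots> \<le> k * (2 * \<epsilon> * N l / (\<gamma> * \<alpha>))"
    using eps_nonneg N_nonneg gamma_pos alpha_pos by (intro mult_right_mono) auto
  also have "k * (2 * \<epsilon> * N l / (\<gamma> * \<alpha>)) = 2 * k * \<epsilon> * N l / (\<gamma> * \<alpha>)" by simp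
  finally have c2: "real (card (cand l t l - typical l t)) \<le> 2 * k * \<epsilon> * N l / (\<gamma> * \<alpha>)" using c1
    by linarith
  have Nl: "N l \<le> card (cand l t l) / \<alpha>"
    using card_cand_ge[OF inv, of l] l alpha_pos by (simp add: field_simps)
  have "2 * k * \<epsilon> * N l / (\<gamma> * \<alpha>) \<le> 2 * k * \<epsilon> * (card (cand l t l) / \<alpha>) / (\<gamma> * \<alpha>)"
    using Nl eps_nonneg gamma_pos alpha_pos by (intro divide_right_mono mult_left_mono) auto
  also have "\<dots> = (2 * k * \<epsilon> / (\<gamma> * \<alpha>^2)) * card (cand l t l)"
    by (simp add: power2_eq_square field_simps)
  also have "\<dots> \<le> \<beta> * card (cand l t l)" using beta_ge by (intro mult_right_mono) auto
  finally show ?thesis using c2 by linarith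
qed

lemma Bd_nonneg: "Bd \<ge> 0" using F_bounds[of undefined undefined] by linarith
lemma n_nonneg: "n \<ge> 0" unfolding n_def using N_nonneg by (intro sum_nonneg) auto

lemma typical_subset: "typical l t \<subseteq> cand l t l"
  unfolding typical_def by auto

lemma finite_typical: "l < k \<Longrightarrow> finite (typical l t)"
  using finite_subset[OF typical_subset finite_cand] by blast

lemma card_cand_le_typical:
  assumes l: "l < k" and inv: "cands_large l t"
  shows "card (cand l t l) \<le> 2 * card (typical l t)"
proof -
  have "card (cand l t l) = card (typical l t) + card (cand l t l - typical l t)"
    using card_Diff_subset[OF finite_typical[OF l] typical_subset] card_mono[OF finite_cand[OF l] typical_subset]
    by simp
  moreover have "\<beta> * real (card (cand l t l)) \<le> (1/2) * real (card (cand l t l))"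
    using beta_le_half by (intro mult_right_mono) auto
  ultimately have "real (card (cand l t l)) \<le> real (2 * card (typical l t))"
    using card_atypical_le[OF l inv] by simp
  then show ?thesis by (simp only: of_nat_le_iff)
qed

lemma card_typical_ge:
  assumes l: "l < k" and inv: "cands_large l t"
  shows "real (card (typical l t)) \<ge> \<alpha> * N l / 2"
  using card_cand_ge[OF inv, of l] card_cand_le_typical[OF l inv] l by simp

lemma N_pos_if_typical:
  assumes l: "l < k" and ne: "typical l t \<noteq> {}"
  shows "N l > 0"
proof -
  obtain u where "u \<in> typical l t" using ne by blast
  then have "u \<in> P l" using typical_subset cand_subset by blast
  then show ?thesis unfolding N_def using finite_parts[OF l] by (auto simp: card_gt_0_iff)
qed

lemma eps_ratio_le:
  assumes l: "l < k" and inv: "cands_large l t" and ne: "typical l t \<noteq> {}" and j: "j \<in> {l..<k}"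
    and c: "\<tau> - \<gamma> \<le> c"
  shows "\<epsilon> * N l * N j / (\<gamma> * c * card (typical l t)) \<le> \<beta> / 2 * card (cand l t j)"
proof -
  have Nl: "N l > 0" by (rule N_pos_if_typical[OF l ne])
  have c0: "c > 0" using c tau_gamma by linarith
  have D: "0 < \<gamma> * (\<tau> - \<gamma>) * \<alpha>^2" using gamma_pos tau_gamma alpha_pos by simp
  have "0 < \<gamma> * c * (\<alpha> * N l / 2)" using gamma_pos c0 alpha_pos Nl by simp
  moreover have "real (card (typical l t)) > 0" using finite_typical[OF l] ne
    by (simp add: card_gt_0_iff)
  ultimately have "\<epsilon> * N l * N j / (\<gamma> * c * card (typical l t)) \<le> \<epsilon> * N l * N j / (\<gamma> * c * (\<alpha> * N l / 2))"
    using card_typical_ge[OF l inv] eps_nonneg N_nonneg gamma_pos c0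
    by (intro divide_left_mono mult_left_mono mult_nonneg_nonneg) auto
  also have "\<dots> = 2 * \<epsilon> / (\<gamma> * c * \<alpha>^2) * (\<alpha> * N j)"
    using Nl alpha_pos by (simp add: field_simps power2_eq_square)
  also have "\<dots> \<le> 2 * \<epsilon> / (\<gamma> * (\<tau> - \<gamma>) * \<alpha>^2) * card (cand l t j)"
    using card_cand_ge[OF inv] l j c c0 D eps_nonneg gamma_pos alpha_pos N_nonneg tau_gamma
    by (intro mult_mono divide_left_mono) auto
  also have "\<dots> \<le> \<beta> / 2 * card (cand l t j)"
  proof (rule mult_right_mono)
    have "1 \<le> real k" using l by simp
    then have "2 * \<epsilon> \<le> 2 * (real k * \<epsilon>)" using mult_right_mono[OF _ eps_nonneg, of 1 "real k"] by simp
    then have "2 * \<epsilon> / (\<gamma> * (\<tau> - \<gamma>) * \<alpha>^2) \<le> 2 * (real k * \<epsilon>) / (\<gamma> * (\<tau> - \<gamma>) * \<alpha>^2)"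
      using D by (intro divide_right_mono) auto
    also have "\<dots> = \<beta> / 2"
      using D unfolding \<beta>_def by (simp add: divide_simps del: mult_pos_pos zero_less_mult_iff)
    finally show "2 * \<epsilon> / (\<gamma> * (\<tau> - \<gamma>) * \<alpha>^2) \<le> \<beta> / 2" .
  qed simp
  finally show ?thesis .
qed

lemma card_low_codegree_typical_le:
  assumes l: "l < k" and inv: "cands_large l t" and ne: "typical l t \<noteq> {}" and j: "j \<in> {l<..<k}"
  shows "card {v\<in>cand l t j. rel_count (link l j) (typical l t) {v}
      < (link_density l j - \<gamma>) * card (typical l t)}
    \<le> \<beta> * card (cand l t j)"
proof -
  have "rel_count (link l j) (typical l t) B \<ge> link_density l j * card (typical l t) * card B - \<epsilon> * N l * N j"
    if "B \<subseteq> cand l t j" for B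
    using link_homogeneous[of l j "typical l t" B] l j that typical_subset cand_subset by fastforce
  then have "\<gamma> * card {v\<in>cand l t j. rel_count (link l j) (typical l t) {v}
        < (link_density l j - \<gamma>) * card (typical l t)} * card (typical l t)
      \<le> \<epsilon> * N l * N j"
    using finite_cand j by (intro card_low_codegree_le[OF finite_typical[OF l] _ gamma_pos]) auto
  then have "card {v\<in>cand l t j. rel_count (link l j) (typical l t) {v}
        < (link_density l j - \<gamma>) * card (typical l t)}
      \<le> \<epsilon> * N l * N j / (\<gamma> * 1 * card (typical l t))"
    using finite_typical[OF l] ne gamma_pos by (simp add: field_simps card_gt_0_iff)
  also have "\<dots> \<le> \<beta> / 2 * card (cand l t j)" using j tau_gamma by (intro eps_ratio_le[OF l inv ne]) auto
  also have "\<dots> \<le> \<beta> * card (cand l t j)" using beta_nonneg by (intro mult_right_mono) auto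
  finally show ?thesis .
qed

lemma sum_typical_pending_ge:
  assumes l: "l < k" and inv: "cands_large l t" and ne: "typical l t \<noteq> {}" and j: "j \<in> {l<..<k}"
  shows "(\<Sum>u\<in>typical l t. avg {v\<in>cand l t j. link l j u v} (gain l t j))
     \<ge> card (typical l t) * (avg (cand l t j) (gain l t j) - (2 * \<gamma> / \<tau> + \<beta>) * (Bd * n * N j))"
proof -
  let ?X = "typical l t" and ?D = "cand l t j" and ?r = "link_density l j" and ?\<Phi> = "Bd * n * N j"
  have fD: "finite ?D" using finite_cand j by auto
  have \<Phi>: "?\<Phi> \<ge> 0" using Bd_nonneg n_nonneg N_nonneg by simp
  have gain: "\<forall>v\<in>?D. 0 \<le> gain l t j v \<and> gain l t j v \<le> ?\<Phi>" using gain_nonneg gain_le l by auto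
  have r: "\<tau> \<le> ?r" "0 \<le> ?r - \<gamma>" "0 < ?r + \<gamma>" using link_density_bounds[of l j] tau_gamma gamma_pos by auto
  have up: "\<forall>u\<in>?X. rel_count (link l j) {u} ?D \<le> (?r + \<gamma>) * card ?D"
    using j unfolding typical_def by auto
  have "card ?X * (avg ?D (gain l t j) - (2 * \<gamma> / \<tau> + \<beta>) * ?\<Phi>)
      \<le> card ?X * ((?r - \<gamma>) / (?r + \<gamma>) * (avg ?D (gain l t j) - \<beta> * ?\<Phi>))"
    using density_ratio_bounds[OF r(1) gamma_pos] tau_gamma r gain \<Phi> beta_nonneg
    by (intro mult_left_mono scaled_deficit_ge avg_nonneg avg_le[OF fD]) auto
  also have "\<dots> \<le> (\<Sum>u\<in>?X. avg {v\<in>?D. link l j u v} (gain l t j))"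
    using sum_avg_neighbours_ge[OF finite_typical[OF l] ne fD gain beta_nonneg \<Phi> r(2,3) up
        card_low_codegree_typical_le[OF l inv ne j]]
    by (simp add: mult.assoc)
  finally show ?thesis .
qed

lemma sum_typical_gain_ge:
  assumes l: "l < k" and inv: "cands_large l t"
  shows "(\<Sum>u\<in>typical l t. gain l t l u)
    \<ge> card (typical l t) * (avg (cand l t l) (gain l t l) - 2 * \<beta> * (Bd * n * N l))"
  using gain_nonneg gain_le l
  by (intro sum_subset_ge_avg[OF finite_cand[OF l] typical_subset card_atypical_le[OF l inv]
        card_cand_le_typical[OF l inv] _ beta_nonneg]) auto

lemma sum_typical_new_weight_ge:
  assumes l: "l < k" and inv: "cands_large l t" and ne: "typical l t \<noteq> {}" and j: "j \<in> {l<..<k}"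
  shows "(\<Sum>u\<in>typical l t. dense_weight l j * avg {v\<in>cand l t j. link l j u v} (F u))
     \<ge> card (typical l t)
         * (dense_size l j * avg2 (cand l t l) (cand l t j) F - N l * N j * Bd * (2 * \<gamma> / \<tau> + 2 * \<beta>))"
proof -
  let ?X = "typical l t" and ?D = "cand l t j" and ?r = "link_density l j"
  let ?s = "avg2 (cand l t l) (cand l t j) F"
  have fD: "finite ?D" using finite_cand j by auto
  have up: "\<forall>u\<in>?X. rel_count (link l j) {u} ?D \<le> (?r + \<gamma>) * card ?D"
    using j unfolding typical_def by auto
  have zero: "\<forall>u\<in>cand l t l. \<forall>v\<in>?D. \<not> link l j u v \<longrightarrow> F u v = 0"
    unfolding link_def using F_nonedge by auto
  have r: "\<tau> \<le> ?r" "?r > 0" using link_density_bounds[of l j] tau_gamma by auto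
  have "\<gamma> / ?r \<le> \<gamma> / \<tau>" using r tau_gamma gamma_pos by (intro divide_left_mono) auto
  moreover have "\<gamma> / \<tau> \<le> 2 * \<gamma> / \<tau>" using gamma_pos tau_gamma by (intro divide_right_mono) auto
  ultimately have "dense_size l j * Bd * (\<gamma> / ?r + 2 * \<beta>) \<le> N l * N j * Bd * (2 * \<gamma> / \<tau> + 2 * \<beta>)"
    using dense_size_le Bd_nonneg N_nonneg gamma_pos r beta_nonneg by (intro mult_mono add_mono) auto
  then have "card ?X * (dense_size l j * ?s - N l * N j * Bd * (2 * \<gamma> / \<tau> + 2 * \<beta>))
      \<le> card ?X * (dense_size l j * ?s - dense_size l j * Bd * (\<gamma> / ?r + 2 * \<beta>))"
    by (intro mult_left_mono) auto
  also have "\<dots> \<le> (\<Sum>u\<in>?X. dense_size l j * ?r * avg {v\<in>?D. link l j u v} (F u))"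
    using F_bounds gamma_pos
    by (intro sum_avg_neighbours_weight_ge[OF finite_cand[OF l] typical_subset ne fD _ zero up r(2) _
          dense_size_nonneg Bd_nonneg beta_nonneg card_atypical_le[OF l inv] card_cand_le_typical[OF l inv]])
      auto
  finally show ?thesis unfolding dense_weight_def by simp
qed

lemma card_few_common_typical_le:
  assumes l: "l < k" and inv: "cands_large l t" and ne: "typical l t \<noteq> {}"
    and i: "i \<in> {l<..<k}" and j: "j \<in> {i<..<k}"
  shows "card {p\<in>cand l t i \<times> cand l t j. card {u\<in>typical l t. link l i u (fst p) \<and> link l j u (snd p)}
      < (link_density l i - \<gamma>) * (link_density l j - \<gamma>) * card (typical l t)}
    \<le> \<beta> * (card (cand l t i) * card (cand l t j))"
proof -
  let ?X = "typical l t" and ?r1 = "link_density l i" and ?r2 = "link_density l j"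
  let ?ci = "real (card (cand l t i))" and ?cj = "real (card (cand l t j))"
  have ij: "i < k" "l \<noteq> i" "j < k" "l \<noteq> j" using i j by auto
  have r: "\<tau> - \<gamma> \<le> ?r1 - \<gamma>" "?r1 - \<gamma> > 0" "?r2 - \<gamma> \<ge> 0"
    using link_density_bounds[of l i] link_density_bounds[of l j] tau_gamma by auto
  have hom: "rel_count (link l i') A B \<ge> link_density l i' * card A * card B - \<epsilon> * N l * N i'"
    if "i' < k" "l \<noteq> i'" "A \<subseteq> P l" "B \<subseteq> cand l t i'" for i' A B
  proof -
    have "B \<subseteq> P i'" using that(4) cand_subset by blast
    from abs_le_D2[OF link_homogeneous[OF l that(1,2,3) this]] show ?thesis by linarith
  qed
  have "card {p\<in>cand l t i \<times> cand l t j. card {u\<in>?X. link l i u (fst p) \<and> link l j u (snd p)}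
      < (?r1 - \<gamma>) * (?r2 - \<gamma>) * card ?X}
    \<le> \<epsilon> * N l * N i * ?cj / (\<gamma> * card ?X) + ?ci * (\<epsilon> * N l * N j) / (\<gamma> * (?r1 - \<gamma>) * card ?X)"
    by (rule card_few_common_neighbours_le[OF order_trans[OF typical_subset cand_subset] finite_parts[OF l]
          finite_cand[OF ij(1)] finite_cand[OF ij(3)] ne hom[OF ij(1,2)] hom[OF ij(3,4)] gamma_pos r(2,3)])
  moreover have "\<epsilon> * N l * N i * ?cj / (\<gamma> * card ?X) \<le> \<beta> / 2 * ?ci * ?cj"
  proof -
    have "\<epsilon> * N l * N i / (\<gamma> * 1 * card ?X) \<le> \<beta> / 2 * ?ci"
      using i tau_gamma by (intro eps_ratio_le[OF l inv ne]) auto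
    then have "\<epsilon> * N l * N i / (\<gamma> * 1 * card ?X) * ?cj \<le> \<beta> / 2 * ?ci * ?cj"
      by (rule mult_right_mono) simp
    then show ?thesis by simp
  qed
  moreover have "?ci * (\<epsilon> * N l * N j) / (\<gamma> * (?r1 - \<gamma>) * card ?X) \<le> ?ci * (\<beta> / 2 * ?cj)"
  proof -
    have "\<epsilon> * N l * N j / (\<gamma> * (?r1 - \<gamma>) * card ?X) \<le> \<beta> / 2 * ?cj"
      using i j r by (intro eps_ratio_le[OF l inv ne]) auto
    then have "?ci * (\<epsilon> * N l * N j / (\<gamma> * (?r1 - \<gamma>) * card ?X)) \<le> ?ci * (\<beta> / 2 * ?cj)"
      by (rule mult_left_mono) simp
    then show ?thesis by simp
  qed
  moreover have "\<beta> / 2 * ?ci * ?cj + ?ci * (\<beta> / 2 * ?cj) = \<beta> * (?ci * ?cj)" by (simp add: algebra_simps)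
  ultimately show ?thesis unfolding of_nat_mult by linarith
qed

lemma sum_typical_future_ge:
  assumes l: "l < k" and inv: "cands_large l t" and ne: "typical l t \<noteq> {}"
    and i: "i \<in> {l<..<k}" and j: "j \<in> {i<..<k}"
  shows "(\<Sum>u\<in>typical l t. dense_size i j * avg2 {v\<in>cand l t i. link l i u v} {w\<in>cand l t j. link l j u w} F)
     \<ge> card (typical l t) * (dense_size i j * avg2 (cand l t i) (cand l t j) F - N i * N j * Bd * (4 * \<gamma> / \<tau> + \<beta>))"
proof -
  let ?X = "typical l t" and ?r1 = "link_density l i" and ?r2 = "link_density l j"
  let ?s = "avg2 (cand l t i) (cand l t j) F"
  have fY: "finite (cand l t i)" and fZ: "finite (cand l t j)" using finite_cand i j by auto
  have r: "\<tau> \<le> ?r1" "?r1 \<le> 1" "\<tau> \<le> ?r2" "?r2 \<le> 1" using link_density_bounds by auto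
  then have rg: "0 \<le> ?r1 - \<gamma>" "0 < ?r1 + \<gamma>" "0 \<le> ?r2 - \<gamma>" "0 < ?r2 + \<gamma>"
    using tau_gamma gamma_pos by auto
  have up1: "\<forall>u\<in>?X. rel_count (link l i) {u} (cand l t i) \<le> (?r1 + \<gamma>) * card (cand l t i)"
    and up2: "\<forall>u\<in>?X. rel_count (link l j) {u} (cand l t j) \<le> (?r2 + \<gamma>) * card (cand l t j)"
    using i j unfolding typical_def by auto
  define f1 f2 where "f1 = (?r1 - \<gamma>) / (?r1 + \<gamma>)" and "f2 = (?r2 - \<gamma>) / (?r2 + \<gamma>)"
  have f1: "1 - 2 * \<gamma> / \<tau> \<le> f1" "f1 \<le> 1" "0 \<le> f1"
    using density_ratio_bounds[of \<tau> ?r1 \<gamma>] r rg gamma_pos tau_gamma by (auto simp: f1_def)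
  have f2: "1 - 2 * \<gamma> / \<tau> \<le> f2" "f2 \<le> 1" "0 \<le> f2"
    using density_ratio_bounds[of \<tau> ?r2 \<gamma>] r rg gamma_pos tau_gamma by (auto simp: f2_def)
  have "2 * \<gamma> / \<tau> \<le> 1" "0 \<le> 2 * \<gamma> / \<tau>" using gamma_le_half_tau gamma_pos tau_gamma by auto
  then have f: "0 \<le> f1 * f2" "f1 * f2 \<le> 1" "1 - 4 * \<gamma> / \<tau> \<le> f1 * f2"
    using f1 f2 ratio_product_ge[of "2 * \<gamma> / \<tau>" f1 f2] by (auto intro: mult_le_one)
  have s: "0 \<le> ?s" "?s \<le> Bd"
    using F_bounds Bd_nonneg by (auto intro!: avg2_nonneg avg2_le fY fZ)
  have "dense_size i j * ((4 * \<gamma> / \<tau> + \<beta>) * Bd) \<le> N i * N j * ((4 * \<gamma> / \<tau> + \<beta>) * Bd)"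
    using dense_size_le[of i j] gamma_pos tau_gamma beta_nonneg Bd_nonneg by (intro mult_right_mono) auto
  then have "card ?X * (dense_size i j * ?s - N i * N j * Bd * (4 * \<gamma> / \<tau> + \<beta>))
      \<le> card ?X * (dense_size i j * (?s - (4 * \<gamma> / \<tau> + \<beta>) * Bd))"
    by (intro mult_left_mono) (simp_all add: algebra_simps)
  also have "\<dots> = dense_size i j * card ?X * (?s - (4 * \<gamma> / \<tau> + \<beta>) * Bd)" by (simp add: mult_ac)
  also have "\<dots> \<le> dense_size i j * card ?X * ((f1 * f2) * (?s - \<beta> * Bd))"
    using scaled_deficit_ge[OF s f(1,2,3) beta_nonneg] dense_size_nonneg[of i j]
    by (intro mult_left_mono) auto
  also have "\<dots> = dense_size i j * (card ?X * (f1 * f2) * (?s - \<beta> * Bd))" by (simp add: mult_ac)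
  also have "\<dots> \<le> dense_size i j * (\<Sum>u\<in>?X. avg2 {v\<in>cand l t i. link l i u v} {w\<in>cand l t j. link l j u w} F)"
    using sum_avg2_neighbours_ge[OF finite_typical[OF l] ne fY fZ _ beta_nonneg Bd_nonneg rg up1 up2
        card_few_common_typical_le[OF l inv ne i j]] F_bounds dense_size_nonneg
    unfolding f1_def f2_def by (intro mult_left_mono) auto
  finally show ?thesis by (simp add: sum_distrib_left)
qed

lemma potential_upd:
  "potential (Suc l) (t(l := u)) = realized l t + gain l t l u
     + (\<Sum>j\<in>{l<..<k}. avg {v\<in>cand l t j. link l j u v} (gain l t j))
     + (\<Sum>j\<in>{l<..<k}. dense_weight l j * avg {v\<in>cand l t j. link l j u v} (F u))
     + (\<Sum>i\<in>{l<..<k}. \<Sum>j\<in>{i<..<k}.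
          dense_size i j * avg2 {v\<in>cand l t i. link l i u v} {v\<in>cand l t j. link l j u v} F)"
proof -
  have ph: "gain (Suc l) (t(l := u)) j = (\<lambda>v. gain l t j v + dense_weight l j * F u v)" for j
    by (intro ext) (rule gain_Suc)
  have U: "pending (Suc l) (t(l := u)) = (\<Sum>j\<in>{l<..<k}. avg {v\<in>cand l t j. link l j u v} (gain l t j))
     + (\<Sum>j\<in>{l<..<k}. dense_weight l j * avg {v\<in>cand l t j. link l j u v} (F u))"
    unfolding pending_def atLeastSucLessThan_greaterThanLessThan cand_Suc ph avg_add avg_cmult
      by (simp add: sum.distrib)
  have P: "future (Suc l) (t(l := u)) = (\<Sum>i\<in>{l<..<k}. \<Sum>j\<in>{i<..<k}.
      dense_size i j * avg2 {v\<in>cand l t i. link l i u v} {v\<in>cand l t j. link l j u v} F)"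
    unfolding future_def atLeastSucLessThan_greaterThanLessThan cand_Suc ..
  show ?thesis unfolding potential_def realized_Suc U P by simp
qed

lemma potential_split:
  assumes "l < k"
  shows "potential l t = realized l t + avg (cand l t l) (gain l t l)
     + (\<Sum>j\<in>{l<..<k}. avg (cand l t j) (gain l t j))
     + (\<Sum>j\<in>{l<..<k}. dense_size l j * avg2 (cand l t l) (cand l t j) F)
     + (\<Sum>i\<in>{l<..<k}. \<Sum>j\<in>{i<..<k}. dense_size i j * avg2 (cand l t i) (cand l t j) F)"
proof -
  have "{l..<k} = insert l {l<..<k}" using assms by auto
  then show ?thesis unfolding potential_def pending_def future_def by simp
qed

lemma sum_N_greaterThan_le: "(\<Sum>j\<in>{l<..<k}. N j) \<le> n"
  unfolding n_def using N_nonneg by (intro sum_mono2) auto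

lemma sum_N_pairs_greaterThan_le: "(\<Sum>i\<in>{l<..<k}. \<Sum>j\<in>{i<..<k}. N i * N j) \<le> n * n"
proof -
  have "(\<Sum>i\<in>{l<..<k}. \<Sum>j\<in>{i<..<k}. N i * N j) \<le> (\<Sum>i\<in>{l<..<k}. \<Sum>j<k. N i * N j)"
    using N_nonneg by (intro sum_mono sum_mono2) auto
  also have "\<dots> \<le> (\<Sum>i<k. \<Sum>j<k. N i * N j)"
    using N_nonneg by (intro sum_mono2 sum_nonneg) auto
  also have "\<dots> = n * n" unfolding n_def by (simp add: sum_product)
  finally show ?thesis .
qed

lemma step_error_le:
  assumes l: "l < k"
  shows "2 * \<beta> * (Bd * n * N l) + (\<Sum>j\<in>{l<..<k}. (2 * \<gamma> / \<tau> + \<beta>) * (Bd * n * N j))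
     + (\<Sum>j\<in>{l<..<k}. N l * N j * Bd * (2 * \<gamma> / \<tau> + 2 * \<beta>))
     + (\<Sum>i\<in>{l<..<k}. \<Sum>j\<in>{i<..<k}. N i * N j * Bd * (4 * \<gamma> / \<tau> + \<beta>))
     \<le> step_loss"
proof -
  have b0: "\<beta> \<ge> 0" by (rule beta_nonneg)
  have g0: "\<gamma> / \<tau> \<ge> 0" using gamma_pos tau_gamma by simp
  have B0: "Bd \<ge> 0" by (rule Bd_nonneg)
  have n0: "n \<ge> 0" by (rule n_nonneg)
  have Nl: "N l \<le> n" using N_le_n l by simp
  have e1: "2 * \<beta> * (Bd * n * N l) \<le> 2 * \<beta> * (Bd * n * n)"
    using b0 B0 n0 Nl by (intro mult_left_mono) auto
  have e2: "(\<Sum>j\<in>{l<..<k}. (2 * \<gamma> / \<tau> + \<beta>) * (Bd * n * N j)) \<le> (2 * \<gamma> / \<tau> + \<beta>) * (Bd * n * n)"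
  proof -
    have "(\<Sum>j\<in>{l<..<k}. (2 * \<gamma> / \<tau> + \<beta>) * (Bd * n * N j)) = (2 * \<gamma> / \<tau> + \<beta>) * (Bd * n) * (\<Sum>j\<in>{l<..<k}. N j)"
      by (simp add: sum_distrib_left mult.assoc)
    also have "\<dots> \<le> (2 * \<gamma> / \<tau> + \<beta>) * (Bd * n) * n"
      using sum_N_greaterThan_le b0 g0 B0 n0 by (intro mult_left_mono) auto
    finally show ?thesis by (simp add: mult.assoc)
  qed
  have e3: "(\<Sum>j\<in>{l<..<k}. N l * N j * Bd * (2 * \<gamma> / \<tau> + 2 * \<beta>)) \<le> (2 * \<gamma> / \<tau> + 2 * \<beta>) * (Bd * n * n)"
  proof -
    have "(\<Sum>j\<in>{l<..<k}. N l * N j * Bd * (2 * \<gamma> / \<tau> + 2 * \<beta>))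
        = (\<Sum>j\<in>{l<..<k}. ((2 * \<gamma> / \<tau> + 2 * \<beta>) * Bd * N l) * N j)"
      by (rule sum.cong) (auto simp: algebra_simps)
    also have "\<dots> = (2 * \<gamma> / \<tau> + 2 * \<beta>) * Bd * N l * (\<Sum>j\<in>{l<..<k}. N j)"
      by (rule sum_distrib_left[symmetric])
    also have "\<dots> \<le> (2 * \<gamma> / \<tau> + 2 * \<beta>) * Bd * n * n"
      using sum_N_greaterThan_le b0 g0 B0 n0 Nl N_nonneg sum_nonneg[of "{l<..<k}" N]
        by (intro mult_mono mult_nonneg_nonneg) auto
    finally show ?thesis by (simp add: algebra_simps)
  qed
  have e4: "(\<Sum>i\<in>{l<..<k}. \<Sum>j\<in>{i<..<k}. N i * N j * Bd * (4 * \<gamma> / \<tau> + \<beta>)) \<le> (4 * \<gamma> / \<tau> + \<beta>) * (Bd * n * n)"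
  proof -
    have "(\<Sum>i\<in>{l<..<k}. \<Sum>j\<in>{i<..<k}. N i * N j * Bd * (4 * \<gamma> / \<tau> + \<beta>))
        = (\<Sum>i\<in>{l<..<k}. \<Sum>j\<in>{i<..<k}. (Bd * (4 * \<gamma> / \<tau> + \<beta>)) * (N i * N j))"
      by (intro sum.cong) (auto simp: algebra_simps)
    also have "\<dots> = Bd * (4 * \<gamma> / \<tau> + \<beta>) * (\<Sum>i\<in>{l<..<k}. \<Sum>j\<in>{i<..<k}. N i * N j)"
      by (simp only: sum_distrib_left)
    also have "\<dots> \<le> Bd * (4 * \<gamma> / \<tau> + \<beta>) * (n * n)"
      using sum_N_pairs_greaterThan_le b0 g0 B0 by (intro mult_left_mono) auto
    finally show ?thesis by (simp add: algebra_simps)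
  qed
  have "2 * \<beta> * (Bd * n * n) + (2 * \<gamma> / \<tau> + \<beta>) * (Bd * n * n) + (2 * \<gamma> / \<tau> + 2 * \<beta>) * (Bd * n * n)
      + (4 * \<gamma> / \<tau> + \<beta>) * (Bd * n * n) = step_loss"
    unfolding step_loss_def by (simp add: power2_eq_square algebra_simps)
  then show ?thesis using e1 e2 e3 e4 by linarith
qed

lemma cands_large_upd:
  assumes l: "l < k" and inv: "cands_large l t" and u: "u \<in> typical l t"
  shows "cands_large (Suc l) (t(l := u))"
  unfolding cands_large_def
proof
  fix j assume j: "j \<in> {Suc l..<k}"
  then have jJ: "j \<in> {l<..<k}" by auto
  have fY: "finite (cand l t j)" using finite_cand j by auto
  have c: "rel_count (link l j) {u} (cand l t j) \<ge> (link_density l j - \<gamma>) * card (cand l t j)" using u jJ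
    unfolding typical_def by auto
  have "(\<tau> - \<gamma>) * card (cand l t j) \<le> (link_density l j - \<gamma>) * card (cand l t j)"
    using link_density_bounds[of l j] by (intro mult_right_mono) auto
  moreover have "(\<tau> - \<gamma>) ^ Suc l * N j \<le> (\<tau> - \<gamma>) * card (cand l t j)"
  proof -
    have "(\<tau> - \<gamma>) ^ l * N j \<le> card (cand l t j)" using inv j unfolding cands_large_def by auto
    then have "(\<tau> - \<gamma>) * ((\<tau> - \<gamma>) ^ l * N j) \<le> (\<tau> - \<gamma>) * card (cand l t j)" using tau_gamma
      by (intro mult_left_mono) auto
    then show ?thesis by (simp add: mult.assoc)
  qed
  ultimately show "(\<tau> - \<gamma>) ^ Suc l * N j \<le> real (card (cand (Suc l) (t(l := u)) j))"
    using c unfolding cand_Suc rel_count_row[OF fY] by linarith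
qed

lemma k_step_loss_le:
  assumes k: "k > 0" and "\<gamma> = 1 / (512 * real k^3)" "\<tau> = 1 / (4 * real k)" "\<beta> \<le> 1 / (96 * real k^2)"
  shows "k * step_loss \<le> Bd * n^2 / (8 * real k)"
proof -
  have "8 * \<gamma> / \<tau> = 1 / (16 * real k^2)"
    unfolding assms(2,3) using k by (simp add: field_simps power2_eq_square power3_eq_cube)
  moreover have "6 * (1 / (96 * real k^2)) = 1 / (16 * real k^2)" "2 * (1 / (16 * real k^2)) = 1 / (8 * real k^2)"
    by simp_all
  ultimately have "8 * \<gamma> / \<tau> + 6 * \<beta> \<le> 1 / (8 * real k^2)" using assms(4) by linarith
  then have "k * step_loss \<le> real k * (Bd * n^2 * (1 / (8 * real k^2)))"
    unfolding step_loss_def using Bd_nonneg by (intro mult_left_mono) auto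
  then show ?thesis using k by (simp add: power2_eq_square)
qed

lemma step_loss_nonneg: "step_loss \<ge> 0"
  unfolding step_loss_def using Bd_nonneg beta_nonneg gamma_pos tau_gamma
  by (intro mult_nonneg_nonneg) auto

lemma greedy_step_empty:
  assumes l: "l < k" and inv: "cands_large l t" and e: "cand l t l = {}"
  shows "cands_large (Suc l) (t(l := u)) \<and> potential (Suc l) (t(l := u)) \<ge> potential l t - step_loss"
proof -
  have "(\<tau> - \<gamma>) ^ l * N l \<le> real (card (cand l t l))" using inv l unfolding cands_large_def by auto
  then have "(\<tau> - \<gamma>) ^ l * N l \<le> 0" using e by simp
  moreover have "(\<tau> - \<gamma>) ^ l > 0" using tau_gamma by simp
  ultimately have Nl: "N l = 0" using N_nonneg[of l]
    by (smt (verit, best) mult_pos_pos)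
  have nH: "\<not> dense l j" "\<not> dense j l" for j using dense_nonempty[of l j] Nl dense_sym[of l j]
    unfolding N_def by auto
  have R: "link l j = (\<lambda>_ _. True)" for j unfolding link_def using nH by auto
  have kz: "dense_size l j = 0" "dense_weight l j = 0" "dense_weight j l = 0" for j
    unfolding dense_weight_def dense_size_def using nH by auto
  have ph: "gain l t l u = 0" unfolding gain_def using kz by simp
  have T1: "potential (Suc l) (t(l := u)) = potential l t"
    unfolding potential_upd potential_split[OF l] R kz ph e by (simp add: avg_def)
  have inv2: "cands_large (Suc l) (t(l := u))"
    unfolding cands_large_def
  proof
    fix j assume j: "j \<in> {Suc l..<k}"
    have "(\<tau> - \<gamma>) ^ l * N j \<le> card (cand l t j)" using inv j unfolding cands_large_def by auto
    moreover have "(\<tau> - \<gamma>) ^ Suc l * N j \<le> (\<tau> - \<gamma>) ^ l * N j"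
      using tau_gamma N_nonneg by (intro mult_right_mono power_decreasing) auto
    ultimately show "(\<tau> - \<gamma>) ^ Suc l * N j \<le> real (card (cand (Suc l) (t(l := u)) j))"
      unfolding cand_Suc R by simp
  qed
  show ?thesis using T1 inv2 step_loss_nonneg by simp
qed

lemma typical_nonempty:
  assumes l: "l < k" and inv: "cands_large l t" and ne: "cand l t l \<noteq> {}"
  shows "typical l t \<noteq> {}"
  using card_cand_le_typical[OF l inv] ne finite_cand[OF l] by (auto simp: card_gt_0_iff)

lemma sum_potential_upd:
  "(\<Sum>u\<in>X. potential (Suc l) (t(l := u))) = card X * realized l t + (\<Sum>u\<in>X. gain l t l u)
     + (\<Sum>j\<in>{l<..<k}. \<Sum>u\<in>X. avg {v\<in>cand l t j. link l j u v} (gain l t j))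
     + (\<Sum>j\<in>{l<..<k}. \<Sum>u\<in>X. dense_weight l j * avg {v\<in>cand l t j. link l j u v} (F u))
     + (\<Sum>i\<in>{l<..<k}. \<Sum>j\<in>{i<..<k}. \<Sum>u\<in>X.
          dense_size i j * avg2 {v\<in>cand l t i. link l i u v} {v\<in>cand l t j. link l j u v} F)"
  unfolding potential_upd by (simp add: sum.distrib sum.swap[where A = X])

lemma sum_potential_upd_ge:
  assumes l: "l < k" and inv: "cands_large l t" and ne: "typical l t \<noteq> {}"
  shows "(\<Sum>u\<in>typical l t. potential (Suc l) (t(l := u))) \<ge> card (typical l t) * (potential l t - step_loss)"
proof -
  define c where "c = real (card (typical l t))"
  define Err where "Err = 2 * \<beta> * (Bd * n * N l) + (\<Sum>j\<in>{l<..<k}. (2 * \<gamma> / \<tau> + \<beta>) * (Bd * n * N j))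
     + (\<Sum>j\<in>{l<..<k}. N l * N j * Bd * (2 * \<gamma> / \<tau> + 2 * \<beta>))
     + (\<Sum>i\<in>{l<..<k}. \<Sum>j\<in>{i<..<k}. N i * N j * Bd * (4 * \<gamma> / \<tau> + \<beta>))"
  have "c * (potential l t - Err) = c * realized l t
     + c * (avg (cand l t l) (gain l t l) - 2 * \<beta> * (Bd * n * N l))
     + (\<Sum>j\<in>{l<..<k}. c * (avg (cand l t j) (gain l t j) - (2 * \<gamma> / \<tau> + \<beta>) * (Bd * n * N j)))
     + (\<Sum>j\<in>{l<..<k}. c * (dense_size l j * avg2 (cand l t l) (cand l t j) F
          - N l * N j * Bd * (2 * \<gamma> / \<tau> + 2 * \<beta>)))
     + (\<Sum>i\<in>{l<..<k}. \<Sum>j\<in>{i<..<k}. c * (dense_size i j * avg2 (cand l t i) (cand l t j) F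
          - N i * N j * Bd * (4 * \<gamma> / \<tau> + \<beta>)))"
    unfolding potential_split[OF l] Err_def
    by (simp add: sum_subtractf sum_distrib_left right_diff_distrib distrib_left)
  also have "\<dots> \<le> (\<Sum>u\<in>typical l t. potential (Suc l) (t(l := u)))"
  proof -
    have "c * (avg (cand l t l) (gain l t l) - 2 * \<beta> * (Bd * n * N l)) \<le> (\<Sum>u\<in>typical l t. gain l t l u)"
      unfolding c_def by (rule sum_typical_gain_ge[OF l inv])
    moreover have "(\<Sum>j\<in>{l<..<k}. c * (avg (cand l t j) (gain l t j) - (2 * \<gamma> / \<tau> + \<beta>) * (Bd * n * N j)))
        \<le> (\<Sum>j\<in>{l<..<k}. \<Sum>u\<in>typical l t. avg {v\<in>cand l t j. link l j u v} (gain l t j))"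
      unfolding c_def by (intro sum_mono sum_typical_pending_ge[OF l inv ne])
    moreover have "(\<Sum>j\<in>{l<..<k}. c * (dense_size l j * avg2 (cand l t l) (cand l t j) F
          - N l * N j * Bd * (2 * \<gamma> / \<tau> + 2 * \<beta>)))
        \<le> (\<Sum>j\<in>{l<..<k}. \<Sum>u\<in>typical l t. dense_weight l j * avg {v\<in>cand l t j. link l j u v} (F u))"
      unfolding c_def by (intro sum_mono sum_typical_new_weight_ge[OF l inv ne])
    moreover have "(\<Sum>i\<in>{l<..<k}. \<Sum>j\<in>{i<..<k}. c * (dense_size i j * avg2 (cand l t i) (cand l t j) F
          - N i * N j * Bd * (4 * \<gamma> / \<tau> + \<beta>)))
        \<le> (\<Sum>i\<in>{l<..<k}. \<Sum>j\<in>{i<..<k}. \<Sum>u\<in>typical l t.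
          dense_size i j * avg2 {v\<in>cand l t i. link l i u v} {v\<in>cand l t j. link l j u v} F)"
      unfolding c_def by (intro sum_mono sum_typical_future_ge[OF l inv ne])
    ultimately show ?thesis unfolding sum_potential_upd c_def by linarith
  qed
  finally have "c * (potential l t - Err) \<le> (\<Sum>u\<in>typical l t. potential (Suc l) (t(l := u)))" .
  moreover have "c * (potential l t - step_loss) \<le> c * (potential l t - Err)"
    using step_error_le[OF l] by (intro mult_left_mono) (auto simp: Err_def c_def)
  ultimately show ?thesis unfolding c_def by linarith
qed

lemma greedy_step:
  assumes l: "l < k" and inv: "cands_large l t"
  shows "\<exists>u. cands_large (Suc l) (t(l := u)) \<and> potential (Suc l) (t(l := u)) \<ge> potential l t - step_loss"
proof (cases "cand l t l = {}")
  case True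
  then show ?thesis using greedy_step_empty[OF l inv] by blast
next
  case False
  then have ne: "typical l t \<noteq> {}" by (rule typical_nonempty[OF l inv])
  obtain u where "u \<in> typical l t" "potential (Suc l) (t(l := u)) \<ge> potential l t - step_loss"
    using exists_ge_avg[OF finite_typical[OF l] ne sum_potential_upd_ge[OF l inv ne]] by blast
  then show ?thesis using cands_large_upd[OF l inv] by blast
qed

lemma potential_0_indep: "potential 0 t = potential 0 t'"
  unfolding potential_def realized_def pending_def future_def gain_def cand_0 by simp

lemma cands_large_0: "cands_large 0 t"
  unfolding cands_large_def cand_0 N_def by simp

lemma greedy_iterate: "l \<le> k \<Longrightarrow> \<exists>t. cands_large l t \<and> potential l t \<ge> potential 0 t0 - l * step_loss"
proof (induction l)
  case 0 then show ?case using cands_large_0 potential_0_indep by auto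
next
  case (Suc l)
  then obtain t where t: "cands_large l t" "potential l t \<ge> potential 0 t0 - l * step_loss" by auto
  obtain u where u: "cands_large (Suc l) (t(l := u))" "potential (Suc l) (t(l := u)) \<ge> potential l t - step_loss"
    using greedy_step[OF _ t(1)] Suc.prems by auto
  define t' where "t' = t(l := u)"
  have u': "cands_large (Suc l) t'" "potential (Suc l) t' \<ge> potential l t - step_loss"
    using u unfolding t'_def by auto
  have e: "real (Suc l) * step_loss = l * step_loss + step_loss"
    by (simp add: distrib_right)
  show ?case using t u' e by (intro exI[of _ t']) linarith
qed

lemma potential_final: "potential k t = (\<Sum>j<k. \<Sum>i<j. dense_weight i j * F (t i) (t j))"
  unfolding potential_def pending_def future_def realized_def gain_def by simp

lemma potential_0: "potential 0 t = (\<Sum>i<k. \<Sum>j\<in>{i<..<k}. if dense i j then (\<Sum>u\<in>P i. \<Sum>v\<in>P j. F u v) else 0)"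
proof -
  have a: "avg (P j) (gain 0 t j) = 0" for j unfolding gain_def avg_def by simp
  have b: "dense_size i j * avg2 (P i) (P j) F = (if dense i j then (\<Sum>u\<in>P i. \<Sum>v\<in>P j. F u v) else 0)" for i j
  proof (cases "dense i j")
    case True
    have "N i > 0" "N j > 0" using dense_nonempty[OF True] dense_nonempty[of j i] True dense_sym[of i j]
      unfolding N_def by auto
    then show ?thesis using True unfolding dense_size_def avg2_def N_def by simp
  next
    case False then show ?thesis unfolding dense_size_def by simp
  qed
  show ?thesis unfolding potential_def realized_def pending_def future_def cand_0 a b
    by (simp add: atLeast0LessThan)
qed

theorem greedy_embedding_exists:
  "\<exists>t. (\<Sum>j<k. \<Sum>i<j. dense_weight i j * F (t i) (t j))
     \<ge> (\<Sum>i<k. \<Sum>j\<in>{i<..<k}. if dense i j then (\<Sum>u\<in>P i. \<Sum>v\<in>P j. F u v) else 0)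
        - k * step_loss"
  using greedy_iterate[OF order_refl, of undefined] unfolding potential_final potential_0 by blast

end

section \<open>Graphs, partitions and the quotient\<close>

lemma sum_square_diag_pairs:
  fixes f :: "nat \<Rightarrow> nat \<Rightarrow> real"
  shows "(\<Sum>i<k. \<Sum>j<k. f i j) = (\<Sum>i<k. f i i) + (\<Sum>j<k. \<Sum>i<j. f i j + f j i)"
  by (induction k) (simp_all add: sum.distrib)

lemma sum_upper_triangle_swap:
  fixes f :: "nat \<Rightarrow> nat \<Rightarrow> real"
  shows "(\<Sum>i<k. \<Sum>j\<in>{i<..<k}. f i j) = (\<Sum>j<k. \<Sum>i<j. f i j)"
proof (induction k)
  case (Suc k)
  have "{k<..<Suc k} = {}" by auto
  then have "(\<Sum>i<Suc k. \<Sum>j\<in>{i<..<Suc k}. f i j) = (\<Sum>i<k. \<Sum>j\<in>{i<..<Suc k}. f i j)"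
    by simp
  also have "\<dots> = (\<Sum>i<k. f i k + (\<Sum>j\<in>{i<..<k}. f i j))"
  proof (intro sum.cong refl)
    fix i assume "i \<in> {..<k}"
    then have "{i<..<Suc k} = insert k {i<..<k}" by auto
    then show "(\<Sum>j\<in>{i<..<Suc k}. f i j) = f i k + (\<Sum>j\<in>{i<..<k}. f i j)" by simp
  qed
  finally show ?case using Suc by (simp add: sum.distrib)
qed simp

lemma wset_eq_rel_count: "wset E A B = rel_count E A B"
  unfolding wset_def rel_count_def gw_def by simp

lemma wset_sym: "(\<And>u v. E u v \<Longrightarrow> E v u) \<Longrightarrow> wset E A B = wset E B A"
  unfolding wset_def gw_def by (subst sum.swap) (intro sum.cong refl, metis)

lemma wset_nonneg: "wset E A B \<ge> 0"
  unfolding wset_eq_rel_count by (rule rel_count_nonneg)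

lemma wset_le: "finite A \<Longrightarrow> finite B \<Longrightarrow> wset E A B \<le> real (card A) * real (card B)"
  unfolding wset_eq_rel_count by (rule rel_count_le)

lemma wset_self_le:
  assumes A: "finite A" and irr: "\<And>u. \<not> E u u"
  shows "wset E A A \<le> real (card A) * (real (card A) - 1)"
proof -
  have "real (card {v\<in>A. E u v}) \<le> real (card A) - 1" if u: "u \<in> A" for u
  proof -
    have "card {v\<in>A. E u v} \<le> card (A - {u})" using A irr by (intro card_mono) auto
    moreover have "card A \<ge> 1" using u A by (simp add: Suc_le_eq card_gt_0_iff) blast
    ultimately show ?thesis using u A by (simp add: of_nat_diff)
  qed
  then have "(\<Sum>u\<in>A. real (card {v\<in>A. E u v})) \<le> (\<Sum>u\<in>A. real (card A) - 1)"
    by (intro sum_mono)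
  then show ?thesis
    unfolding wset_eq_rel_count rel_count_by_rows[of E A A] using A by (simp add: rel_count_row)
qed

lemma wset_eq_card_pairs:
  assumes "finite A" "finite B"
  shows "wset E A B = real (card {p\<in>A \<times> B. E (fst p) (snd p)})"
proof -
  have "wset E A B = (\<Sum>p\<in>A \<times> B. if E (fst p) (snd p) then 1 else 0)"
    unfolding wset_def gw_def using assms by (simp add: sum.cartesian_product split_def)
  also have "\<dots> = real (card {p\<in>A \<times> B. E (fst p) (snd p)})"
    using assms by (simp add: sum.If_cases Int_def conj_commute)
  finally show ?thesis .
qed

lemma num_edges_le_wset:
  assumes V: "finite V"
  shows "real (num_edges V E) \<le> wset E V V"
proof -
  have "{{u, v} | u v. u \<in> V \<and> v \<in> V \<and> E u v} = (\<lambda>p. {fst p, snd p}) ` {p\<in>V \<times> V. E (fst p) (snd p)}"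
    by (auto simp: image_iff; metis fst_conv snd_conv)
  then have "num_edges V E \<le> card {p\<in>V \<times> V. E (fst p) (snd p)}"
    unfolding num_edges_def using V by (simp add: card_image_le)
  then show ?thesis using wset_eq_card_pairs[OF V V, of E] by simp
qed

lemma sum_partition:
  assumes rp: "regular_partition V E k \<epsilon> P" and V: "finite V"
  shows "(\<Sum>u\<in>V. f u) = (\<Sum>i<k. \<Sum>u\<in>P i. f u)"
proof -
  have "\<forall>i<k. P i \<subseteq> V" "(\<Union>i<k. P i) = V" "\<forall>i<k. \<forall>j<k. i \<noteq> j \<longrightarrow> P i \<inter> P j = {}"
    using rp unfolding regular_partition_def by auto
  then show ?thesis
    using sum.UNION_disjoint[of "{..<k}" P f] V by (auto intro: finite_subset)
qed

lemma sum_partition_pairs: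
  assumes rp: "regular_partition V E k \<epsilon> P" and V: "finite V"
  shows "(\<Sum>u\<in>V. \<Sum>v\<in>V. f u v) = (\<Sum>i<k. \<Sum>j<k. \<Sum>u\<in>P i. \<Sum>v\<in>P j. f u v)"
proof -
  have "(\<Sum>u\<in>V. \<Sum>v\<in>V. f u v) = (\<Sum>i<k. \<Sum>u\<in>P i. \<Sum>j<k. \<Sum>v\<in>P j. f u v)"
    by (simp only: sum_partition[OF rp V])
  also have "\<dots> = (\<Sum>i<k. \<Sum>j<k. \<Sum>u\<in>P i. \<Sum>v\<in>P j. f u v)"
    by (intro sum.cong refl sum.swap)
  finally show ?thesis .
qed

lemma card_part_le:
  assumes rp: "regular_partition V E k \<epsilon> P" and i: "i < k"
  shows "real (card (P i)) \<le> real (card V) / real k + 1"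
proof -
  have "int (card (P i)) \<le> \<lceil>real (card V) / real k\<rceil>"
    using rp i floor_le_ceiling[of "real (card V) / real k"] unfolding regular_partition_def by force
  then show ?thesis by linarith
qed

lemma sum_wset_parts_le:
  assumes rp: "regular_partition V E k \<epsilon> P" and V: "finite V" and irr: "\<And>u. \<not> E u u"
  shows "(\<Sum>i<k. wset E (P i) (P i)) \<le> real (card V) ^ 2 / real k"
proof -
  have sub: "P i \<subseteq> V" if "i < k" for i using rp that unfolding regular_partition_def by auto
  have "wset E (P i) (P i) \<le> real (card (P i)) * (real (card V) / real k)" if i: "i < k" for i
  proof -
    have "wset E (P i) (P i) \<le> real (card (P i)) * (real (card (P i)) - 1)"
      using sub[OF i] V by (intro wset_self_le[OF _ irr]) (auto intro: finite_subset)
    also have "\<dots> \<le> real (card (P i)) * (real (card V) / real k)"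
      using card_part_le[OF rp i] by (intro mult_left_mono) auto
    finally show ?thesis .
  qed
  then have "(\<Sum>i<k. wset E (P i) (P i)) \<le> (\<Sum>i<k. real (card (P i)) * (real (card V) / real k))"
    by (intro sum_mono) simp
  also have "\<dots> = (\<Sum>i<k. real (card (P i))) * (real (card V) / real k)"
    by (rule sum_distrib_right[symmetric])
  also have "(\<Sum>i<k. real (card (P i))) = real (card V)"
    using sum_partition[OF rp V, of "\<lambda>_. 1::real"] by simp
  finally show ?thesis by (simp add: power2_eq_square)
qed

lemma sum_card_pairs_le:
  assumes rp: "regular_partition V E k \<epsilon> P" and V: "finite V"
  shows "(\<Sum>j<k. \<Sum>i<j. real (card (P i)) * real (card (P j))) \<le> real (card V)^2 / 2"
proof -
  have "real (card V) = (\<Sum>i<k. real (card (P i)))"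
    using sum_partition[OF rp V, of "\<lambda>_. 1::real"] by simp
  then have "real (card V)^2 = (\<Sum>i<k. \<Sum>j<k. real (card (P i)) * real (card (P j)))"
    by (simp add: power2_eq_square sum_product)
  also have "\<dots> = (\<Sum>i<k. real (card (P i)) * real (card (P i)))
      + 2 * (\<Sum>j<k. \<Sum>i<j. real (card (P i)) * real (card (P j)))"
    unfolding sum_square_diag_pairs by (simp add: sum_distrib_left mult.commute)
  finally have "real (card V)^2 = (\<Sum>i<k. real (card (P i)) * real (card (P i)))
      + 2 * (\<Sum>j<k. \<Sum>i<j. real (card (P i)) * real (card (P j)))" .
  moreover have "(\<Sum>i<k. real (card (P i)) * real (card (P i))) \<ge> 0" by (intro sum_nonneg) auto
  ultimately show ?thesis by simp
qed

lemma value_le_opt: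
  assumes "finite A" "finite B" "h \<in> A \<rightarrow>\<^sub>E B"
  shows "(\<Sum>u\<in>A. \<Sum>v\<in>A. wA u v * wB (h u) (h v)) \<le> opt A wA B wB"
  unfolding opt_def by (rule Max_ge) (use assms in \<open>auto simp: finite_PiE\<close>)

lemma opt_attained:
  assumes "finite A" "finite B" "B \<noteq> {}"
  shows "\<exists>h\<in>A \<rightarrow>\<^sub>E B. opt A wA B wB = (\<Sum>u\<in>A. \<Sum>v\<in>A. wA u v * wB (h u) (h v))"
proof -
  have "A \<rightarrow>\<^sub>E B \<noteq> {}" using assms by (simp add: PiE_eq_empty_iff)
  then have "opt A wA B wB \<in> (\<lambda>h. \<Sum>u\<in>A. \<Sum>v\<in>A. wA u v * wB (h u) (h v)) ` (A \<rightarrow>\<^sub>E B)"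
    unfolding opt_def by (intro Max_in) (use assms in \<open>auto simp: finite_PiE\<close>)
  then show ?thesis by auto
qed

lemma opt_nonneg:
  assumes "finite A" "finite B" "B \<noteq> {}" "\<And>u v. wA u v \<ge> 0" "\<And>a b. wB a b \<ge> 0"
  shows "opt A wA B wB \<ge> 0"
  using opt_attained[OF assms(1-3), of wA wB] assms(4,5)
  by (auto intro!: sum_nonneg mult_nonneg_nonneg)

lemma lift_quotient_map:
  assumes rp: "regular_partition V E k \<epsilon> P" and V: "finite V" and g: "g \<in> {..<k} \<rightarrow>\<^sub>E {..<m}"
  shows "\<exists>h\<in>V \<rightarrow>\<^sub>E {..<m}. (\<Sum>u\<in>V. \<Sum>v\<in>V. gw E u v * W (h u) (h v))
          = (\<Sum>i<k. \<Sum>j<k. quot_weight E P i j * W (g i) (g j))"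
proof -
  define part where "part u = (SOME i. i < k \<and> u \<in> P i)" for u
  define h where "h = restrict (\<lambda>u. g (part u)) V"
  have sub: "\<And>i. i < k \<Longrightarrow> P i \<subseteq> V" and un: "(\<Union>i<k. P i) = V"
    and dj: "\<forall>i<k. \<forall>j<k. i \<noteq> j \<longrightarrow> P i \<inter> P j = {}"
    using rp unfolding regular_partition_def by auto
  have part: "part u = i" if "u \<in> P i" "i < k" for u i
    unfolding part_def by (rule some_equality) (use that dj in auto)
  have hP: "h u = g i" if "u \<in> P i" "i < k" for u i
    unfolding h_def using that sub part by auto
  have "h \<in> V \<rightarrow>\<^sub>E {..<m}" unfolding h_def using g un part by fastforce
  moreover have "(\<Sum>u\<in>V. \<Sum>v\<in>V. gw E u v * W (h u) (h v))
      = (\<Sum>i<k. \<Sum>j<k. \<Sum>u\<in>P i. \<Sum>v\<in>P j. gw E u v * W (g i) (g j))"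
    unfolding sum_partition_pairs[OF rp V] by (intro sum.cong refl) (simp add: hP)
  ultimately show ?thesis
    unfolding quot_weight_def wset_def by (auto simp: sum_distrib_right)
qed

lemma opt_quotient_le_opt:
  fixes m :: nat and W :: "nat \<Rightarrow> nat \<Rightarrow> real"
  assumes rp: "regular_partition V E k \<epsilon> P" and V: "finite V" and m: "m \<ge> 1"
  shows "opt {..<k} (quot_weight E P) {..<m} W \<le> opt V (gw E) {..<m} W"
proof -
  have "0 \<in> {..<m}" using m by simp
  then have "{..<m} \<noteq> {}" by blast
  then obtain g where g: "g \<in> {..<k} \<rightarrow>\<^sub>E {..<m}"
    "opt {..<k} (quot_weight E P) {..<m} W = (\<Sum>i<k. \<Sum>j<k. quot_weight E P i j * W (g i) (g j))"
    using opt_attained[of "{..<k}" "{..<m}" "quot_weight E P" W] by auto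
  obtain h where "h \<in> V \<rightarrow>\<^sub>E {..<m}"
    "(\<Sum>u\<in>V. \<Sum>v\<in>V. gw E u v * W (h u) (h v)) = (\<Sum>i<k. \<Sum>j<k. quot_weight E P i j * W (g i) (g j))"
    using lift_quotient_map[OF rp V g(1)] by blast
  then show ?thesis using g(2) value_le_opt[OF V, of "{..<m}" h "gw E" W] by simp
qed

lemma card_separating_subsets:
  assumes K: "finite K" and i: "i \<in> K" and j: "j \<in> K" and ij: "i \<noteq> j"
  shows "card {S\<in>Pow K. i \<in> S \<and> j \<notin> S} = 2 ^ (card K - 2)"
proof -
  have "bij_betw (\<lambda>S. S - {i}) {S\<in>Pow K. i \<in> S \<and> j \<notin> S} (Pow (K - {i, j}))"
  proof (rule bij_betw_byWitness[where f' = "insert i"])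
    show "insert i ` Pow (K - {i, j}) \<subseteq> {S\<in>Pow K. i \<in> S \<and> j \<notin> S}" using i ij by auto
  qed auto
  then have "card {S\<in>Pow K. i \<in> S \<and> j \<notin> S} = card (Pow (K - {i, j}))" by (rule bij_betw_same_card)
  also have "\<dots> = 2 ^ (card K - 2)" using K i j ij by (simp add: card_Pow card_Diff_subset)
  finally show ?thesis .
qed

lemma sum_cut_eq_sum_indicator:
  assumes "finite K" "S \<subseteq> K"
  shows "(\<Sum>i\<in>S. \<Sum>j\<in>K - S. f i j) = (\<Sum>i\<in>K. \<Sum>j\<in>K. if i \<in> S \<and> j \<notin> S then f i j else 0)"
proof -
  have "(\<Sum>j\<in>K. if i \<in> S \<and> j \<notin> S then f i j else 0) = (if i \<in> S then \<Sum>j\<in>K - S. f i j else 0)" for i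
    using assms(1) by (auto simp: sum.If_cases Diff_eq Compl_eq)
  then show ?thesis using assms by (simp add: sum.If_cases Int_absorb1)
qed

lemma sum_all_cuts:
  fixes f :: "'a \<Rightarrow> 'a \<Rightarrow> real"
  assumes K: "finite K"
  shows "(\<Sum>S\<in>Pow K. \<Sum>i\<in>S. \<Sum>j\<in>K - S. f i j) = 2 ^ (card K - 2) * (\<Sum>i\<in>K. \<Sum>j\<in>K - {i}. f i j)"
proof -
  have pair: "(\<Sum>S\<in>Pow K. if i \<in> S \<and> j \<notin> S then f i j else 0) = (if j = i then 0 else 2 ^ (card K - 2) * f i j)"
    if "i \<in> K" "j \<in> K" for i j
  proof (cases "j = i")
    case False
    have "(\<Sum>S\<in>Pow K. if i \<in> S \<and> j \<notin> S then f i j else 0) = card {S\<in>Pow K. i \<in> S \<and> j \<notin> S} * f i j"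
      using K by (simp add: sum.If_cases Int_def conj_commute)
    then show ?thesis using card_separating_subsets[OF K that False[symmetric]] False by simp
  qed simp
  have "(\<Sum>S\<in>Pow K. \<Sum>i\<in>S. \<Sum>j\<in>K - S. f i j)
      = (\<Sum>S\<in>Pow K. \<Sum>i\<in>K. \<Sum>j\<in>K. if i \<in> S \<and> j \<notin> S then f i j else 0)"
    using K by (intro sum.cong refl sum_cut_eq_sum_indicator) auto
  also have "\<dots> = (\<Sum>i\<in>K. \<Sum>S\<in>Pow K. \<Sum>j\<in>K. if i \<in> S \<and> j \<notin> S then f i j else 0)"
    by (rule sum.swap)
  also have "\<dots> = (\<Sum>i\<in>K. \<Sum>j\<in>K. \<Sum>S\<in>Pow K. if i \<in> S \<and> j \<notin> S then f i j else 0)"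
    by (intro sum.cong refl sum.swap)
  also have "\<dots> = (\<Sum>i\<in>K. \<Sum>j\<in>K. if j = i then 0 else 2 ^ (card K - 2) * f i j)"
    using pair by (intro sum.cong refl) auto
  also have "\<dots> = 2 ^ (card K - 2) * (\<Sum>i\<in>K. \<Sum>j\<in>K - {i}. f i j)"
    using K by (simp add: sum.If_cases Diff_eq Int_def conj_commute sum_distrib_left)
  finally show ?thesis .
qed

lemma exists_quarter_cut:
  fixes f :: "nat \<Rightarrow> nat \<Rightarrow> real"
  assumes k: "k \<ge> 2"
  shows "\<exists>S\<subseteq>{..<k}. (\<Sum>i\<in>S. \<Sum>j\<in>{..<k} - S. f i j) \<ge> (1/4) * (\<Sum>i<k. \<Sum>j\<in>{..<k} - {i}. f i j)"
proof -
  obtain d where "k = d + 2" using k by (metis le_add_diff_inverse2)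
  then have "real (card (Pow {..<k})) = 4 * 2 ^ (k - 2)" by (simp add: card_Pow power_add)
  then have "(\<Sum>S\<in>Pow {..<k}. \<Sum>i\<in>S. \<Sum>j\<in>{..<k} - S. f i j)
      \<ge> card (Pow {..<k}) * ((1/4) * (\<Sum>i<k. \<Sum>j\<in>{..<k} - {i}. f i j))"
    unfolding sum_all_cuts[OF finite_lessThan] by simp
  then obtain S where "S \<in> Pow {..<k}"
      "(\<Sum>i\<in>S. \<Sum>j\<in>{..<k} - S. f i j) \<ge> (1/4) * (\<Sum>i<k. \<Sum>j\<in>{..<k} - {i}. f i j)"
    using exists_ge_avg[of "Pow {..<k}"] by blast
  then show ?thesis by blast
qed

lemma opt_quotient_ge_cut:
  fixes q W :: "nat \<Rightarrow> nat \<Rightarrow> real"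
  assumes k: "k \<ge> 2" and ab: "a < m" "b < m" and W: "\<And>a b. W a b \<ge> 0" and q: "\<And>i j. q i j \<ge> 0"
  shows "opt {..<k} q {..<m} W \<ge> W a b / 4 * (\<Sum>i<k. \<Sum>j\<in>{..<k} - {i}. q i j)"
proof -
  obtain S where S: "S \<subseteq> {..<k}" "(\<Sum>i\<in>S. \<Sum>j\<in>{..<k} - S. q i j) \<ge> (1/4) * (\<Sum>i<k. \<Sum>j\<in>{..<k} - {i}. q i j)"
    using exists_quarter_cut[OF k, of q] by blast
  define g where "g = restrict (\<lambda>i. if i \<in> S then a else b) {..<k}"
  have g: "g \<in> {..<k} \<rightarrow>\<^sub>E {..<m}" unfolding g_def using ab by auto
  have "W a b * ((1/4) * (\<Sum>i<k. \<Sum>j\<in>{..<k} - {i}. q i j)) \<le> W a b * (\<Sum>i\<in>S. \<Sum>j\<in>{..<k} - S. q i j)"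
    using S(2) W by (intro mult_left_mono) auto
  also have "\<dots> = (\<Sum>i\<in>S. \<Sum>j\<in>{..<k} - S. q i j * W (g i) (g j))"
    unfolding sum_distrib_left using S(1)
      by (intro sum.cong refl) (auto simp: g_def subset_iff mult.commute)
  also have "\<dots> \<le> (\<Sum>i\<in>S. \<Sum>j<k. q i j * W (g i) (g j))"
    using q W by (intro sum_mono sum_mono2) auto
  also have "\<dots> \<le> (\<Sum>i<k. \<Sum>j<k. q i j * W (g i) (g j))"
    using q W S by (intro sum_mono2 sum_nonneg) auto
  also have "\<dots> \<le> opt {..<k} q {..<m} W" by (rule value_le_opt[OF _ _ g]) auto
  finally show ?thesis by simp
qed

lemma sum_offdiag_quotient_ge:
  assumes gr: "is_graph V E" and rp: "regular_partition V E k \<epsilon> P" and k: "k > 0"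
  shows "(\<Sum>i<k. \<Sum>j\<in>{..<k} - {i}. quot_weight E P i j)
    \<ge> real (num_edges V E) - real (card V)^2 / real k"
proof -
  have V: "finite V" and irr: "\<And>u. \<not> E u u" using gr unfolding is_graph_def by auto
  have "(\<Sum>i<k. \<Sum>j<k. quot_weight E P i j) = wset E V V"
    unfolding quot_weight_def wset_def sum_partition_pairs[OF rp V] ..
  moreover have "(\<Sum>j<k. quot_weight E P i j) = quot_weight E P i i + (\<Sum>j\<in>{..<k} - {i}. quot_weight E P i j)"
    if "i < k" for i
    using that by (simp add: sum.remove)
  moreover have "(\<Sum>i<k. quot_weight E P i i) \<le> real (card V)^2 / real k"
    using sum_wset_parts_le[OF rp V irr] unfolding quot_weight_def .
  ultimately show ?thesis using num_edges_le_wset[OF V, of E] by (simp add: sum.distrib)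
qed

lemma lndist_le:
  fixes a b e :: real
  assumes "0 \<le> b" "b \<le> a" "a \<le> (1 + e) * b" "0 \<le> e"
  shows "lndist a b \<le> ereal e"
proof (cases "b = 0")
  case False
  then have b: "b > 0" and a: "a > 0" using assms by auto
  have "ln a \<le> ln ((1 + e) * b)" using a b assms by simp
  also have "\<dots> = ln (1 + e) + ln b" using b assms by (simp add: ln_mult)
  finally have "ln a \<le> ln (1 + e) + ln b" .
  moreover have "ln (1 + e) \<le> e" using assms(4) by (rule ln_add_one_self_le_self)
  moreover have "ln b \<le> ln a" using a b assms by simp
  ultimately show ?thesis using a b unfolding lndist_def by simp
qed (use assms in \<open>simp add: lndist_def\<close>)

lemma d_opt_le:
  fixes e :: ereal
  assumes le: "\<And>(m::nat) w. m \<ge> 1 \<Longrightarrow> (\<And>a b. w a b \<ge> 0) \<Longrightarrow>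
    lndist (opt A wA {..<m} w) (opt B wB {..<m} w) \<le> e"
  shows "d_opt A wA B wB \<le> e"
  unfolding d_opt_def
proof (rule SUP_least, clarsimp)
  fix m :: nat and w :: "nat \<Rightarrow> nat \<Rightarrow> real"
  assume "Suc 0 \<le> m" "\<forall>u v. w u v \<in> \<rat> \<and> 0 \<le> w u v"
  then show "lndist (opt A wA {..<m} w) (opt B wB {..<m} w) \<le> e" by (intro le) auto
qed


definition part_density :: "('a \<Rightarrow> 'a \<Rightarrow> bool) \<Rightarrow> (nat \<Rightarrow> 'a set) \<Rightarrow> nat \<Rightarrow> nat \<Rightarrow> real" where
  "part_density E P i j = wset E (P i) (P j) / (real (card (P i)) * real (card (P j)))"

definition dense_pair :: "('a \<Rightarrow> 'a \<Rightarrow> bool) \<Rightarrow> (nat \<Rightarrow> 'a set) \<Rightarrow> nat \<Rightarrow> nat \<Rightarrow> nat \<Rightarrow> bool" where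
  "dense_pair E P k i j \<longleftrightarrow> i < k \<and> j < k \<and> i \<noteq> j \<and> 1 / (4 * real k) \<le> part_density E P i j"

lemma k_power_bound:
  fixes k :: nat
  assumes k: "k \<ge> 20"
  shows "1572864 * k^7 * (8*k)^(2*k) \<le> k^(8*k^2)"
proof -
  have "(1572864::nat) \<le> 20^5" by simp
  also have "\<dots> \<le> k^5" using k by (intro power_mono) auto
  finally have a: "(1572864::nat) \<le> k^5" .
  have b: "(8*k)^(2*k) \<le> (k^2)^(2*k)"
    using k by (intro power_mono) (auto simp: power2_eq_square)
  have "1572864 * k^7 * (8*k)^(2*k) \<le> k^5 * k^7 * (k^2)^(2*k)"
    using a b by (intro mult_mono) auto
  also have "\<dots> = k^(12 + 4*k)" by (simp add: power_add power_mult[symmetric] mult.commute)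
  also have "\<dots> \<le> k^(8*k^2)"
  proof (rule power_increasing)
    have "20 * k \<le> k * k" using k by (intro mult_right_mono) auto
    then show "12 + 4 * k \<le> 8 * k^2" unfolding power2_eq_square using k by linarith
  qed (use k in auto)
  finally show ?thesis .
qed

lemma embedding_parameters:
  fixes k :: nat and \<epsilon> \<gamma> \<tau> :: real
  defines "\<gamma> \<equiv> 1 / (512 * real k^3)" and "\<tau> \<equiv> 1 / (4 * real k)"
  assumes k: "k \<ge> 20" and \<epsilon>: "0 \<le> \<epsilon>" "\<epsilon> \<le> (1 / real k) ^ (8 * k^2)"
  shows "2 * \<gamma> \<le> \<tau>"
    and "4 * k * \<epsilon> / (\<gamma> * (\<tau> - \<gamma>) * ((\<tau> - \<gamma>) ^ k)^2) \<le> 1 / (96 * real k^2)"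
proof -
  have kpos: "real k > 0" using k by simp
  have "real k ^ 1 \<le> real k^3" using k by (intro power_increasing) auto
  then have k3: "8 * real k \<le> 512 * real k^3" by (simp only: power_one_right)
  then show "2 * \<gamma> \<le> \<tau>" unfolding \<gamma>_def \<tau>_def using kpos by (simp add: field_simps)
  have "\<gamma> \<le> 1 / (8 * real k)" unfolding \<gamma>_def using k3 kpos by (intro divide_left_mono) auto
  then have \<tau>\<gamma>: "1 / (8 * real k) \<le> \<tau> - \<gamma>" unfolding \<tau>_def by simp
  have pos: "0 < 1 / (8 * real k)" "0 < \<gamma>" unfolding \<gamma>_def using kpos by auto
  have "\<gamma> * (1 / (8 * real k)) * (1 / (8 * real k)) ^ (2*k) \<le> \<gamma> * (\<tau> - \<gamma>) * ((\<tau> - \<gamma>) ^ k)^2"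
    using \<tau>\<gamma> pos order_less_le_trans[OF pos(1) \<tau>\<gamma>]
    by (intro mult_mono) (auto simp: power_mult[symmetric] mult.commute[of 2] intro: power_mono)
  then have "4 * k * \<epsilon> / (\<gamma> * (\<tau> - \<gamma>) * ((\<tau> - \<gamma>) ^ k)^2)
      \<le> 4 * k * \<epsilon> / (\<gamma> * (1 / (8 * real k)) * (1 / (8 * real k)) ^ (2*k))"
    using pos \<epsilon>(1) order_less_le_trans[OF pos(1) \<tau>\<gamma>] by (intro divide_left_mono mult_pos_pos) auto
  also have "\<dots> = 16384 * real k^5 * (8 * real k)^(2*k) * \<epsilon>"
    unfolding \<gamma>_def using kpos by (simp add: field_simps power_divide eval_nat_numeral)
  also have "\<dots> \<le> 1 / (96 * real k^2)"
  proof -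
    have "real (1572864 * k^7 * (8*k)^(2*k)) \<le> real (k^(8*k^2))"
      using k_power_bound[OF k] by (simp only: of_nat_le_iff)
    then have "1572864 * real k^7 * (8 * real k)^(2*k) \<le> real k^(8*k^2)" by simp
    moreover have "\<epsilon> * real k^(8*k^2) \<le> 1"
      using mult_right_mono[OF \<epsilon>(2), of "real k^(8*k^2)"] kpos
      by (simp add: power_one_over[symmetric] power_mult_distrib[symmetric])
    ultimately have "1572864 * real k^7 * (8 * real k)^(2*k) * \<epsilon> \<le> 1"
      using \<epsilon>(1) by (smt (verit) mult_right_mono mult.commute)
    then show ?thesis using kpos by (simp add: field_simps eval_nat_numeral)
  qed
  finally show "4 * k * \<epsilon> / (\<gamma> * (\<tau> - \<gamma>) * ((\<tau> - \<gamma>) ^ k)^2) \<le> 1 / (96 * real k^2)" .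
qed

(* The hypotheses of the theorem do not force eps >= 0, hence max eps 0. *)
lemma greedy_embedding_regular_partition:
  assumes gr: "is_graph V E" and rp: "regular_partition V E k \<epsilon> P" and k: "k \<ge> 20"
    and \<epsilon>: "\<epsilon> \<le> (1 / real k) ^ (8 * k^2)"
    and F: "\<And>u v. 0 \<le> F u v \<and> F u v \<le> Bd" and F0: "\<And>u v. \<not> E u v \<Longrightarrow> F u v = 0"
  shows "greedy_embedding k P E (dense_pair E P k) (part_density E P) F Bd (max \<epsilon> 0)
           (1 / (512 * real k^3)) (1 / (4 * real k))"
proof -
  have V: "finite V" and Esym: "\<And>u v. E u v \<Longrightarrow> E v u" using gr unfolding is_graph_def by auto
  have finP: "finite (P i)" if "i < k" for i
    using rp that V unfolding regular_partition_def by (auto intro: finite_subset)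
  have kpos: "real k > 0" using k by simp
  note params = embedding_parameters[OF k, of "max \<epsilon> 0"]
  have "(1::real) \<le> real k ^ 2" using k by (intro one_le_power) auto
  then have "2 \<le> 96 * real k ^ 2" by linarith
  then have "1 / (96 * real k^2) \<le> 1 / 2" using kpos by (intro divide_left_mono) auto
  note small = order_trans[OF params(2) this]
  have "1 / (4 * real k) \<le> 1" using k by (simp add: field_simps)
  show ?thesis
  proof
    show "dense_pair E P k i j = dense_pair E P k j i" for i j
      unfolding dense_pair_def part_density_def using wset_sym[of E, OF Esym]
        by (auto simp: mult.commute)
    show "1 / (4 * real k) \<le> part_density E P i j \<and> part_density E P i j \<le> 1" if "dense_pair E P k i j" for i j
      using that wset_le[OF finP finP, of i j E] unfolding dense_pair_def part_density_def
      by (cases "card (P i) * card (P j) = 0") (auto simp: divide_le_eq_1)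
    show "card (P i) > 0" if "dense_pair E P k i j" for i j
      using that kpos unfolding dense_pair_def part_density_def by (cases "card (P i) = 0") auto
    show "\<bar>rel_count E A B - part_density E P i j * card A * card B\<bar> \<le> max \<epsilon> 0 * card (P i) * card (P j)"
      if "dense_pair E P k i j" "A \<subseteq> P i" "B \<subseteq> P j" for i j A B
    proof -
      have "homogeneous E (P i) (P j) \<epsilon>" using rp that(1) unfolding regular_partition_def dense_pair_def
        by auto
      then have "\<bar>wset E A B - part_density E P i j * card A * card B\<bar> \<le> \<epsilon> * card (P i) * card (P j)"
        unfolding homogeneous_def part_density_def Let_def using that(2,3) by blast
      also have "\<dots> \<le> max \<epsilon> 0 * card (P i) * card (P j)" by (intro mult_right_mono) auto
      finally show ?thesis by (simp add: wset_eq_rel_count)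
    qed
  qed (use F F0 finP params(1) small \<open>1 / (4 * real k) \<le> 1\<close> \<epsilon> kpos in auto)
qed

section \<open>The quotient almost attains the optimum\<close>

lemma value_split_parts:
  assumes rp: "regular_partition V E k \<epsilon> P" and V: "finite V" and Esym: "\<And>u v. E u v \<Longrightarrow> E v u"
  shows "(\<Sum>u\<in>V. \<Sum>v\<in>V. gw E u v * G u v) = (\<Sum>i<k. \<Sum>u\<in>P i. \<Sum>v\<in>P i. gw E u v * G u v)
     + (\<Sum>j<k. \<Sum>i<j. \<Sum>u\<in>P i. \<Sum>v\<in>P j. gw E u v * (G u v + G v u))"
proof -
  have "gw E v u = gw E u v" for u v unfolding gw_def using Esym by auto
  then have "(\<Sum>u\<in>P j. \<Sum>v\<in>P i. gw E u v * G u v) = (\<Sum>u\<in>P i. \<Sum>v\<in>P j. gw E u v * G v u)" for i j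
    by (subst sum.swap) simp
  then show ?thesis
    unfolding sum_partition_pairs[OF rp V] sum_square_diag_pairs
    by (simp add: distrib_left sum.distrib)
qed

lemma pair_value_le_wset:
  assumes "\<And>u v. G u v \<le> M"
  shows "(\<Sum>u\<in>A. \<Sum>v\<in>B. gw E u v * G u v) \<le> M * wset E A B"
proof -
  have "(\<Sum>u\<in>A. \<Sum>v\<in>B. gw E u v * G u v) \<le> (\<Sum>u\<in>A. \<Sum>v\<in>B. gw E u v * M)"
    using assms by (intro sum_mono mult_left_mono) (auto simp: gw_def)
  then show ?thesis unfolding wset_def by (simp add: sum_distrib_left sum_distrib_right mult.commute)
qed

lemma sum_diag_value_le:
  assumes rp: "regular_partition V E k \<epsilon> P" and V: "finite V" and irr: "\<And>u. \<not> E u u"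
    and G: "\<And>u v. G u v \<le> M" and M: "M \<ge> 0"
  shows "(\<Sum>i<k. \<Sum>u\<in>P i. \<Sum>v\<in>P i. gw E u v * G u v) \<le> M * real (card V)^2 / real k"
proof -
  have "(\<Sum>i<k. \<Sum>u\<in>P i. \<Sum>v\<in>P i. gw E u v * G u v) \<le> (\<Sum>i<k. M * wset E (P i) (P i))"
    using pair_value_le_wset[of G M] G by (intro sum_mono) auto
  also have "\<dots> \<le> M * (real (card V)^2 / real k)"
    unfolding sum_distrib_left[symmetric] using sum_wset_parts_le[OF rp V irr] M by (rule mult_left_mono)
  finally show ?thesis by simp
qed

lemma sum_sparse_pairs_le:
  assumes rp: "regular_partition V E k \<epsilon> P" and V: "finite V"
    and G: "\<And>u v. G u v \<le> M" and M: "M \<ge> 0"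
  shows "(\<Sum>j<k. \<Sum>i<j. \<Sum>u\<in>P i. \<Sum>v\<in>P j. gw E u v * (G u v + G v u))
    \<le> (\<Sum>j<k. \<Sum>i<j. if dense_pair E P k i j then \<Sum>u\<in>P i. \<Sum>v\<in>P j. gw E u v * (G u v + G v u) else 0)
      + M * real (card V)^2 / (4 * real k)"
proof -
  define N where "N i = real (card (P i))" for i
  have finP: "finite (P i)" if "i < k" for i
    using rp that V unfolding regular_partition_def by (auto intro: finite_subset)
  have pair: "(\<Sum>u\<in>P i. \<Sum>v\<in>P j. gw E u v * (G u v + G v u))
      \<le> (if dense_pair E P k i j then \<Sum>u\<in>P i. \<Sum>v\<in>P j. gw E u v * (G u v + G v u) else 0)
        + 2 * M * (N i * N j) / (4 * real k)" if ij: "i < j" "j < k" for i j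
  proof (cases "dense_pair E P k i j")
    case False
    have w: "wset E (P i) (P j) \<le> N i * N j / (4 * real k)"
    proof (cases "N i * N j = 0")
      case True
      then show ?thesis using wset_le[OF finP finP, of i j E] ij by (auto simp: N_def)
    next
      case False
      then show ?thesis using \<open>\<not> dense_pair E P k i j\<close> ij
        by (auto simp: dense_pair_def part_density_def N_def field_simps)
    qed
    have "G u v + G v u \<le> 2 * M" for u v using G[of u v] G[of v u] by simp
    then have "(\<Sum>u\<in>P i. \<Sum>v\<in>P j. gw E u v * (G u v + G v u)) \<le> 2 * M * wset E (P i) (P j)"
      by (rule pair_value_le_wset)
    also have "\<dots> \<le> 2 * M * (N i * N j / (4 * real k))" using w M by (intro mult_left_mono) auto
    finally show ?thesis using False by simp
  qed (use M in \<open>simp add: N_def\<close>)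
  then have "(\<Sum>j<k. \<Sum>i<j. \<Sum>u\<in>P i. \<Sum>v\<in>P j. gw E u v * (G u v + G v u))
      \<le> (\<Sum>j<k. \<Sum>i<j. (if dense_pair E P k i j then \<Sum>u\<in>P i. \<Sum>v\<in>P j. gw E u v * (G u v + G v u) else 0)
        + 2 * M * (N i * N j) / (4 * real k))"
    by (intro sum_mono pair) auto
  also have "\<dots> = (\<Sum>j<k. \<Sum>i<j. if dense_pair E P k i j then \<Sum>u\<in>P i. \<Sum>v\<in>P j. gw E u v * (G u v + G v u) else 0)
      + 2 * M / (4 * real k) * (\<Sum>j<k. \<Sum>i<j. N i * N j)"
    by (simp add: sum.distrib sum_distrib_left mult_ac)
  also have "2 * M / (4 * real k) * (\<Sum>j<k. \<Sum>i<j. N i * N j) \<le> 2 * M / (4 * real k) * (real (card V)^2 / 2)"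
    using sum_card_pairs_le[OF rp V] M unfolding N_def by (intro mult_left_mono) auto
  finally show ?thesis by simp
qed

lemma sum_lower_pairs_le_opt:
  fixes q W x lam :: "nat \<Rightarrow> nat \<Rightarrow> real"
  assumes g: "g \<in> {..<k} \<rightarrow>\<^sub>E {..<m}" and q: "\<And>i j. 0 \<le> q i j" and q_sym: "\<And>i j. q i j = q j i"
    and W: "\<And>a b. 0 \<le> W a b" and lam: "\<And>i j. 0 \<le> lam i j \<and> lam i j \<le> q i j"
    and x: "\<And>i j. i < k \<Longrightarrow> j < k \<Longrightarrow> 0 \<le> x i j \<and> x i j \<le> W (g i) (g j) + W (g j) (g i)"
  shows "(\<Sum>j<k. \<Sum>i<j. lam i j * x i j) \<le> opt {..<k} q {..<m} W"
proof -
  have "lam i j * x i j \<le> q i j * W (g i) (g j) + q j i * W (g j) (g i)" if "i < k" "j < k" for i j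
  proof -
    have "lam i j * x i j \<le> q i j * (W (g i) (g j) + W (g j) (g i))"
      using lam x[OF that] W q by (intro mult_mono) (auto intro: add_nonneg_nonneg)
    then show ?thesis using q_sym[of i j] by (simp add: algebra_simps)
  qed
  then have "(\<Sum>j<k. \<Sum>i<j. lam i j * x i j) \<le> (\<Sum>j<k. \<Sum>i<j. q i j * W (g i) (g j) + q j i * W (g j) (g i))"
    by (intro sum_mono) auto
  also have "\<dots> \<le> (\<Sum>i<k. q i i * W (g i) (g i)) + (\<Sum>j<k. \<Sum>i<j. q i j * W (g i) (g j) + q j i * W (g j) (g i))"
    using q W by (simp add: sum_nonneg)
  also have "\<dots> = (\<Sum>i<k. \<Sum>j<k. q i j * W (g i) (g j))" by (rule sum_square_diag_pairs[symmetric])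
  also have "\<dots> \<le> opt {..<k} q {..<m} W" by (rule value_le_opt[OF _ _ g]) auto
  finally show ?thesis .
qed

lemma dense_pairs_value_le_opt_quotient:
  fixes W :: "nat \<Rightarrow> nat \<Rightarrow> real" and h :: "'a \<Rightarrow> nat"
  assumes gr: "is_graph V E" and rp: "regular_partition V E k \<epsilon> P" and k: "k \<ge> 20"
    and \<epsilon>: "\<epsilon> \<le> (1 / real k) ^ (8 * k^2)"
    and W: "\<And>a b. W a b \<ge> 0" and WM: "\<And>a b. a < m \<Longrightarrow> b < m \<Longrightarrow> W a b \<le> M" and h: "\<And>u. h u < m"
  shows "(\<Sum>i<k. \<Sum>j\<in>{i<..<k}. if dense_pair E P k i j
            then \<Sum>u\<in>P i. \<Sum>v\<in>P j. gw E u v * (W (h u) (h v) + W (h v) (h u)) else 0)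
    \<le> opt {..<k} (quot_weight E P) {..<m} W + M * real (card V)^2 / (4 * real k)"
proof -
  define F where "F u v = gw E u v * (W (h u) (h v) + W (h v) (h u))" for u v
  define \<gamma> \<tau> :: real where "\<gamma> = 1 / (512 * real k^3)" and "\<tau> = 1 / (4 * real k)"
  have V: "finite V" and Esym: "\<And>u v. E u v \<Longrightarrow> E v u" using gr unfolding is_graph_def by auto
  have M: "M \<ge> 0" using W[of 0 0] WM[of 0 0] h[of undefined] by force
  have gw: "0 \<le> gw E u v \<and> gw E u v \<le> 1" for u v unfolding gw_def by auto
  have F: "0 \<le> F u v \<and> F u v \<le> 2 * M" for u v
    using gw[of u v] W WM[OF h h] mult_left_le_one_le[of "W (h u) (h v) + W (h v) (h u)" "gw E u v"]
    unfolding F_def by (smt (verit) mult_nonneg_nonneg)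
  interpret Emb: greedy_embedding k P E "dense_pair E P k" "part_density E P" F "2 * M" "max \<epsilon> 0" \<gamma> \<tau>
    unfolding \<gamma>_def \<tau>_def using F
    by (intro greedy_embedding_regular_partition[OF gr rp k \<epsilon>]) (auto simp: F_def gw_def)
  obtain t where t: "(\<Sum>i<k. \<Sum>j\<in>{i<..<k}. if dense_pair E P k i j then \<Sum>u\<in>P i. \<Sum>v\<in>P j. F u v else 0)
      - k * Emb.step_loss \<le> (\<Sum>j<k. \<Sum>i<j. Emb.dense_weight i j * F (t i) (t j))"
    using Emb.greedy_embedding_exists by blast
  define g where "g = restrict (\<lambda>i. h (t i)) {..<k}"
  have g: "g \<in> {..<k} \<rightarrow>\<^sub>E {..<m}" unfolding g_def using h by auto
  have q: "quot_weight E P i j \<ge> 0" for i j unfolding quot_weight_def by (rule wset_nonneg)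
  have q_sym: "quot_weight E P i j = quot_weight E P j i" for i j
    unfolding quot_weight_def using wset_sym[of E, OF Esym] by auto
  \<comment> \<open>On a dense pair the embedding uses exactly the quotient weight.\<close>
  have "Emb.dense_weight i j \<le> quot_weight E P i j" for i j
  proof (cases "dense_pair E P k i j")
    case True
    then have "card (P i) > 0" "card (P j) > 0"
      using Emb.dense_nonempty Emb.dense_sym by blast+
    then show ?thesis using True
      by (simp add: Emb.dense_weight_def Emb.dense_size_def Emb.link_density_def Emb.N_def
          part_density_def quot_weight_def)
  qed (simp add: Emb.dense_weight_def Emb.dense_size_def q)
  then have embedded: "(\<Sum>j<k. \<Sum>i<j. Emb.dense_weight i j * F (t i) (t j)) \<le> opt {..<k} (quot_weight E P) {..<m} W"
    using Emb.dense_weight_nonneg F gw W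
    by (intro sum_lower_pairs_le_opt[OF g q q_sym W]) (auto simp: F_def g_def mult_left_le_one_le)
  have "Emb.n = real (card V)"
    unfolding Emb.n_def Emb.N_def using sum_partition[OF rp V, of "\<lambda>_. 1::real"] by simp
  moreover have "Emb.\<beta> \<le> 1 / (96 * real k^2)"
    using embedding_parameters(2)[OF k, of "max \<epsilon> 0"] \<epsilon> k
    unfolding Emb.\<beta>_def Emb.\<alpha>_def unfolding \<gamma>_def \<tau>_def by simp
  ultimately have "k * Emb.step_loss \<le> 2 * M * real (card V)^2 / (8 * real k)"
    using Emb.k_step_loss_le[OF _ \<gamma>_def \<tau>_def] k by simp
  then show ?thesis using t embedded unfolding F_def by simp
qed

lemma value_le_opt_quotient:
  fixes W :: "nat \<Rightarrow> nat \<Rightarrow> real"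
  assumes gr: "is_graph V E" and rp: "regular_partition V E k \<epsilon> P" and k: "k \<ge> 20"
    and \<epsilon>: "\<epsilon> \<le> (1 / real k) ^ (8 * k^2)" and m: "m \<ge> 1"
    and W: "\<And>a b. W a b \<ge> 0" and WM: "\<And>a b. a < m \<Longrightarrow> b < m \<Longrightarrow> W a b \<le> M"
    and h: "h \<in> V \<rightarrow>\<^sub>E {..<m}"
  shows "(\<Sum>u\<in>V. \<Sum>v\<in>V. gw E u v * W (h u) (h v))
     \<le> opt {..<k} (quot_weight E P) {..<m} W + 3/2 * M * real (card V)^2 / real k"
proof -
  have V: "finite V" and Esym: "\<And>u v. E u v \<Longrightarrow> E v u" and irr: "\<And>u. \<not> E u u"
    using gr unfolding is_graph_def by auto
  have M: "M \<ge> 0" using W[of 0 0] WM[of 0 0] m by force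
  define h' where "h' u = (if u \<in> V then h u else 0)" for u
  define G where "G u v = W (h' u) (h' v)" for u v
  have h': "h' u < m" for u unfolding h'_def using h m by auto
  have G: "G u v \<le> M" for u v unfolding G_def using WM h' by auto
  have "(\<Sum>u\<in>V. \<Sum>v\<in>V. gw E u v * W (h u) (h v)) = (\<Sum>u\<in>V. \<Sum>v\<in>V. gw E u v * G u v)"
    unfolding G_def h'_def by simp
  also have "\<dots> = (\<Sum>i<k. \<Sum>u\<in>P i. \<Sum>v\<in>P i. gw E u v * G u v)
     + (\<Sum>j<k. \<Sum>i<j. \<Sum>u\<in>P i. \<Sum>v\<in>P j. gw E u v * (G u v + G v u))"
    by (rule value_split_parts[OF rp V Esym])
  also have "\<dots> \<le> M * real (card V)^2 / real k
     + ((\<Sum>i<k. \<Sum>j\<in>{i<..<k}. if dense_pair E P k i j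
            then \<Sum>u\<in>P i. \<Sum>v\<in>P j. gw E u v * (G u v + G v u) else 0)
        + M * real (card V)^2 / (4 * real k))"
    using sum_diag_value_le[OF rp V irr G M] sum_sparse_pairs_le[OF rp V G M]
    unfolding sum_upper_triangle_swap by (rule add_mono)
  also have "\<dots> \<le> M * real (card V)^2 / real k
     + (opt {..<k} (quot_weight E P) {..<m} W + M * real (card V)^2 / (4 * real k)
        + M * real (card V)^2 / (4 * real k))"
    using dense_pairs_value_le_opt_quotient[where W = W and h = h' and m = m and M = M, OF gr rp k \<epsilon> W WM h']
    unfolding G_def by linarith
  also have "\<dots> = opt {..<k} (quot_weight E P) {..<m} W + 3/2 * M * real (card V)^2 / real k"
    using k by (simp add: field_simps)
  finally show ?thesis .
qed

lemma opt_le_opt_quotient_add: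
  fixes w :: "nat \<Rightarrow> nat \<Rightarrow> real"
  assumes gr: "is_graph V E" and rp: "regular_partition V E k \<epsilon> P" and k: "k \<ge> 20"
    and \<epsilon>: "\<epsilon> \<le> (1 / real k) ^ (8 * k^2)" and m: "m \<ge> 1"
    and w: "\<And>a b. w a b \<ge> 0" and M: "\<And>a b. a < m \<Longrightarrow> b < m \<Longrightarrow> w a b \<le> M"
  shows "opt V (gw E) {..<m} w \<le> opt {..<k} (quot_weight E P) {..<m} w + 3/2 * M * real (card V)^2 / real k"
proof -
  have "finite V" using gr unfolding is_graph_def by auto
  moreover have "0 \<in> {..<m}" using m by simp
  ultimately obtain h where "h \<in> V \<rightarrow>\<^sub>E {..<m}" "opt V (gw E) {..<m} w = (\<Sum>u\<in>V. \<Sum>v\<in>V. gw E u v * w (h u) (h v))"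
    using opt_attained[of V "{..<m}" "gw E" w] by auto
  then show ?thesis using value_le_opt_quotient[OF gr rp k \<epsilon> m w M] by simp
qed

lemma exists_max_weight:
  fixes w :: "nat \<Rightarrow> nat \<Rightarrow> real"
  assumes "m \<ge> 1"
  obtains a b where "a < m" "b < m" "\<And>a' b'. a' < m \<Longrightarrow> b' < m \<Longrightarrow> w a' b' \<le> w a b"
proof -
  let ?S = "(\<lambda>p. w (fst p) (snd p)) ` ({..<m} \<times> {..<m})"
  have fin: "finite ?S" by simp
  have "(0, 0) \<in> {..<m} \<times> {..<m}" using assms by simp
  then have "?S \<noteq> {}" by blast
  from Max_in[OF fin this] obtain p where "p \<in> {..<m} \<times> {..<m}" "Max ?S = w (fst p) (snd p)"
    by (auto simp del: Max_in)
  then obtain a b where ab: "a < m" "b < m" "w a b = Max ?S" by (cases p) auto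
  have "w a' b' \<le> Max ?S" if "a' < m" "b' < m" for a' b'
    using that by (intro Max_ge[OF fin]) force
  then show ?thesis using that ab by simp
qed

lemma num_edges_le_square:
  assumes "is_graph V E"
  shows "real (num_edges V E) \<le> real (card V)^2"
proof -
  have "finite V" using assms unfolding is_graph_def by auto
  then show ?thesis
    using num_edges_le_wset[of V E] wset_le[of V V E] by (simp add: power2_eq_square)
qed

lemma k_ge_20:
  fixes c \<epsilon>\<^sub>0 :: real
  assumes "k > 0" "c \<le> 1" "0 < \<epsilon>\<^sub>0" "\<epsilon>\<^sub>0 < 1" "1 / real k \<le> c / 10 * (\<epsilon>\<^sub>0 / (1 + \<epsilon>\<^sub>0))"
  shows "k \<ge> 20"
proof -
  have "\<epsilon>\<^sub>0 / (1 + \<epsilon>\<^sub>0) \<le> 1 / 2" using assms by (simp add: field_simps)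
  then have "c / 10 * (\<epsilon>\<^sub>0 / (1 + \<epsilon>\<^sub>0)) \<le> 1 / 10 * (1 / 2)"
    using assms by (intro mult_mono) auto
  then have "1 / real k \<le> 1 / 20" using assms(5) by linarith
  then show ?thesis using assms(1) by (simp add: field_simps)
qed

lemma additive_loss_le:
  fixes D c e M N :: real
  assumes "0 \<le> M" "0 \<le> N" "0 \<le> e" "0 \<le> D" "D \<le> c / 10 * (e / (1 + e))"
  shows "3/2 * M * N * D \<le> e * (M / 4 * (c * N - N * D))"
proof -
  have "(6 + e) * D \<le> 10 * (1 + e) * D" using assms by (intro mult_right_mono) auto
  also have "\<dots> \<le> c * e" using assms by (simp add: field_simps)
  finally have "6 * D \<le> e * (c - D)" by (simp add: algebra_simps)
  then have "M * N / 4 * (6 * D) \<le> M * N / 4 * (e * (c - D))"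
    using assms by (intro mult_left_mono) auto
  then show ?thesis by (simp add: algebra_simps)
qed

lemma opt_quotient_ge_edges:
  fixes w :: "nat \<Rightarrow> nat \<Rightarrow> real"
  assumes gr: "is_graph V E" and rp: "regular_partition V E k \<epsilon> P" and k: "k \<ge> 2"
    and ab: "a < m" "b < m" and w: "\<And>a b. w a b \<ge> 0"
  shows "w a b / 4 * (real (num_edges V E) - real (card V)^2 / real k) \<le> opt {..<k} (quot_weight E P) {..<m} w"
proof -
  have q: "quot_weight E P i j \<ge> 0" for i j unfolding quot_weight_def by (rule wset_nonneg)
  have "w a b / 4 * (real (num_edges V E) - real (card V)^2 / real k)
      \<le> w a b / 4 * (\<Sum>i<k. \<Sum>j\<in>{..<k} - {i}. quot_weight E P i j)"
    using sum_offdiag_quotient_ge[OF gr rp] k w[of a b] by (intro mult_left_mono) auto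
  also have "\<dots> \<le> opt {..<k} (quot_weight E P) {..<m} w" by (rule opt_quotient_ge_cut[OF k ab w q])
  finally show ?thesis .
qed

lemma opt_le_opt_quotient_mult:
  fixes w :: "nat \<Rightarrow> nat \<Rightarrow> real" and c \<epsilon>\<^sub>0 :: real
  assumes gr: "is_graph V E" and rp: "regular_partition V E k \<epsilon> P" and k: "k \<ge> 20"
    and \<epsilon>: "\<epsilon> \<le> (1 / real k) ^ (8 * k^2)"
    and edges: "real (num_edges V E) = c * real (card V)^2"
    and \<epsilon>\<^sub>0: "0 \<le> \<epsilon>\<^sub>0" "1 / real k \<le> c / 10 * (\<epsilon>\<^sub>0 / (1 + \<epsilon>\<^sub>0))"
    and m: "m \<ge> 1" and w: "\<And>a b. w a b \<ge> 0"
  shows "opt V (gw E) {..<m} w \<le> (1 + \<epsilon>\<^sub>0) * opt {..<k} (quot_weight E P) {..<m} w"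
proof -
  obtain a b where ab: "a < m" "b < m" and M: "\<And>a' b'. a' < m \<Longrightarrow> b' < m \<Longrightarrow> w a' b' \<le> w a b"
    using exists_max_weight[OF m] by blast
  let ?n = "real (card V)"
  have "3/2 * w a b * ?n^2 * (1 / real k) \<le> \<epsilon>\<^sub>0 * (w a b / 4 * (c * ?n^2 - ?n^2 * (1 / real k)))"
    using \<epsilon>\<^sub>0 w[of a b] by (intro additive_loss_le) auto
  also have "\<dots> \<le> \<epsilon>\<^sub>0 * opt {..<k} (quot_weight E P) {..<m} w"
    using opt_quotient_ge_edges[OF gr rp _ ab w] k edges \<epsilon>\<^sub>0 by (intro mult_left_mono) auto
  finally show ?thesis
    using opt_le_opt_quotient_add[where w = w and M = "w a b", OF gr rp k \<epsilon> m w M]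
    by (simp add: algebra_simps)
qed

theorem theorem36:
  fixes V :: "'a set" and E :: "'a \<Rightarrow> 'a \<Rightarrow> bool" and n k :: nat
    and P :: "nat \<Rightarrow> 'a set" and \<epsilon> \<epsilon>\<^sub>0 c :: real
  assumes "is_graph V E"
    and "card V = n"
    and "c = real (num_edges V E) / real n ^ 2"
    and "0 < \<epsilon>\<^sub>0" and "\<epsilon>\<^sub>0 < 1"
    and "0 < k"
    and "regular_partition V E k \<epsilon> P"
    and "1 / real k \<le> c / 10 * (\<epsilon>\<^sub>0 / (1 + \<epsilon>\<^sub>0))"
    and "\<epsilon> \<le> (1 / real k) ^ (8 * k ^ 2)"
  shows "d_opt V (gw E) {..<k} (quot_weight E P) \<le> ereal \<epsilon>\<^sub>0"
proof (rule d_opt_le)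
  note gr = assms(1) and rp = assms(7)
  have "c \<le> 1" using num_edges_le_square[OF gr] assms(2,3) by (cases "n = 0") (auto simp: divide_le_eq_1)
  then have k: "k \<ge> 20" by (rule k_ge_20[OF assms(6) _ assms(4,5,8)])
  have "0 < 1 / real k" using assms(6) by simp
  then have "c \<noteq> 0" using assms(8) by auto
  then have "real n \<noteq> 0" using assms(3) by auto
  then have edges: "real (num_edges V E) = c * real (card V)^2" using assms(2,3) by simp
  fix m :: nat and w :: "nat \<Rightarrow> nat \<Rightarrow> real"
  assume m: "m \<ge> 1" and w: "\<And>a b. w a b \<ge> 0"
  let ?a = "opt V (gw E) {..<m} w" and ?b = "opt {..<k} (quot_weight E P) {..<m} w"
  have "?a \<le> (1 + \<epsilon>\<^sub>0) * ?b" using assms(4,8)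
    by (intro opt_le_opt_quotient_mult[OF gr rp k assms(9) edges _ _ m w]) auto
  moreover have "?b \<le> ?a" using opt_quotient_le_opt[OF rp _ m] gr unfolding is_graph_def by blast
  moreover have "?b \<ge> 0" using m w wset_nonneg
    by (intro opt_nonneg) (auto simp: quot_weight_def lessThan_empty_iff)
  ultimately show "lndist ?a ?b \<le> ereal \<epsilon>\<^sub>0" using assms(4) by (intro lndist_le) auto
qed

end
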